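(* Under the hypotheses below, define for $r,r'\in C$ the two-layer transfer matrices $\mathbf T(r,r'):=T^{[0]}(r)\,T^{[1]}(r')$ and $\dot{\mathbf T}(r,r'):=\dot T^{[0]}(r)\,\dot T^{[1]}(r')$, operators on $W=\bigotimes_{l,m}V_{(1_l2_m)}$. If there exists $(t,t')\in C^2$ such that $\dot{\mathbf T}(t,t')$ is diagonalizable with pairwise distinct eigenvalues, then $[\mathbf T(r,r'),\mathbf T(s,s')]=0$ for all $(r,r'),(s,s')\in C^2$.
   Context: Let $V$ be a finite-dimensional complex vector space and $C$ a set (of spectral parameters). Let $R,\dot R,\ddot R,\dddot R:\mathbb{Z}/2\mathbb{Z}\times C^3\to\mathrm{End}(V\otimes V\otimes V)$ be maps; write $X^{[\sigma]}(r_1,r_2,r_3)$ for the value of $X\in\{R,\dot R,\ddot R,\dddot R\}$ at $(\sigma,r_1,r_2,r_3)$. Superscript colors $[\sigma]$ are always read modulo 2. Notation: consider a finite totally ordered set of "planes", each plane $\alpha$ carrying a parameter $r_\alpha\in C$. For each pair $\alpha<\beta$ let $V_{(\alpha\beta)}$ be a copy of $V$. For $\alpha<\beta<\gamma$, $X^{[\sigma]}_{(\alpha\beta\gamma)}$ denotes the operator on the tensor product of all the spaces $V_{(\cdot\cdot)}$ under consideration that acts as $X^{[\sigma]}(r_\alpha,r_\beta,r_\gamma)$ on $V_{(\alpha\beta)}\otimes V_{(\alpha\gamma)}\otimes V_{(\beta\gamma)}$ (in this order) and as the identity on all other factors. Bicolored tetrahedron equations (BTE$[\sigma]$): for any four planes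 $1<2<3<4$ with arbitrary parameters $r_1,r_2,r_3,r_4\in C$, on $V_{(12)}\otimes V_{(13)}\otimes V_{(14)}\otimes V_{(23)}\otimes V_{(24)}\otimes V_{(34)}$, $$R^{[\sigma]}_{(123)}\dot R^{[\sigma+1]}_{(124)}\ddot R^{[\sigma]}_{(134)}\dddot R^{[\sigma+1]}_{(234)}=\dddot R^{[\sigma]}_{(234)}\ddot R^{[\sigma+1]}_{(134)}\dot R^{[\sigma]}_{(124)}R^{[\sigma+1]}_{(123)}.$$ Fix integers $L,M\ge1$, planes $1_1<\dots<1_{2L}<2_1<\dots<2_{2M}$ with fixed arbitrary parameters $r_{1_l},r_{2_m}\in C$. Trace reduction: for planes $\alpha<\beta$ larger than all $1_l$, define $$\mathbf{R}^{[\sigma]}_{\alpha\beta}:=\mathrm{Tr}_{V_{(\alpha\beta)}}\Bigl(R^{[\sigma+1]}_{(1_1\alpha\beta)}R^{[\sigma+2]}_{(1_2\alpha\beta)}\cdots R^{[\sigma+2L]}_{(1_{2L}\alpha\beta)}\Bigr)$$ (partial trace over $V_{(\alpha\beta)}$), an operator on $\bigotimes_l(V_{(1_l\alpha)}\otimes V_{(1_l\beta)})$; $\dot{\mathbf R},\ddot{\mathbf R}$ are defined likewise from $\dot R,\ddot R$. Layer transfer matrix: for $r\in C$, let $3$ be an extra plane larger than all $2_m$ with parameter $r_3=r$, and set $$T^{[\sigma]}(r):=\mathrm{Tr}_{\bigotimes_l V_{(1_l3)}}\Bigl(\mathbf R^{[\sigma+1]}_{2_1 3}\,\mathbf R^{[\sigma+2]}_{2_2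 3}\cdots\mathbf R^{[\sigma+2M]}_{2_{2M}3}\Bigr),$$ an operator on $W=\bigotimes_{l,m}V_{(1_l2_m)}$ (it depends only on $r$, not on the label of the extra plane). $\dot T^{[\sigma]}(r)$ is defined the same way with $\mathbf R$ replaced by $\dot{\mathbf R}$. Standing hypotheses: $R,\dot R,\ddot R,\dddot R$ satisfy BTE$[\sigma]$ for both $\sigma\in\mathbb{Z}/2\mathbb{Z}$ and all parameters; $\dddot R^{[\sigma]}(r_1,r_2,r_3)$ is invertible for all $\sigma$ and all $r_1,r_2,r_3\in C$; and for every $\sigma$ and all parameters of two planes $3<4$ larger than all $1_l,2_m$, the trace reduction $\ddot{\mathbf R}^{[\sigma]}_{34}$ is invertible. *)

theory Defs
  imports Complex_Main "HOL-Library.Z2" "HOL-Library.FuncSet"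
begin

text \<open>
Model: V has a finite basis indexed by a finite type 'b, so V = 'b => complex.
A tensor product of copies of V indexed by a finite set S of "slots" has basis
states S = S ->E UNIV; an operator on it is given by its matrix kernel
('s => 'b) => ('s => 'b) => complex, only relevant on states S.
Colours Z/2 are the type bit of HOL-Library.Z2.
\<close>

type_synonym ('s, 'b) kop = "('s \<Rightarrow> 'b) \<Rightarrow> ('s \<Rightarrow> 'b) \<Rightarrow> complex"
type_synonym 'b k3 = "('b \<times> 'b \<times> 'b) \<Rightarrow> ('b \<times> 'b \<times> 'b) \<Rightarrow> complex"

definition states :: "'s set \<Rightarrow> ('s \<Rightarrow> 'b::finite) set" where
  "states S = PiE S (\<lambda>_. UNIV)"

definition opid :: "'s set \<Rightarrow> ('s, 'b::finite) kop" where
  "opid S x y = (if x = y then 1 else 0)"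

definition opmul :: "'s set \<Rightarrow> ('s, 'b::finite) kop \<Rightarrow> ('s, 'b) kop \<Rightarrow> ('s, 'b) kop" where
  "opmul S A B x y = (\<Sum>z\<in>states S. A x z * B z y)"

definition opprod :: "'s set \<Rightarrow> ('s, 'b::finite) kop list \<Rightarrow> ('s, 'b) kop" where
  "opprod S As = foldr (opmul S) As (opid S)"

definition opeq :: "'s set \<Rightarrow> ('s, 'b::finite) kop \<Rightarrow> ('s, 'b) kop \<Rightarrow> bool" where
  "opeq S A B \<longleftrightarrow> (\<forall>x\<in>states S. \<forall>y\<in>states S. A x y = B x y)"

definition op_invertible :: "'s set \<Rightarrow> ('s, 'b::finite) kop \<Rightarrow> bool" where
  "op_invertible S A \<longleftrightarrow> (\<exists>B. opeq S (opmul S A B) (opid S) \<and> opeq S (opmul S B A) (opid S))"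

definition simple_diagonalizable :: "'s set \<Rightarrow> ('s, 'b::finite) kop \<Rightarrow> bool" where
  "simple_diagonalizable S A \<longleftrightarrow>
     (\<exists>P Q (ev :: ('s \<Rightarrow> 'b) \<Rightarrow> complex).
        opeq S (opmul S P Q) (opid S) \<and> opeq S (opmul S Q P) (opid S) \<and>
        inj_on ev (states S) \<and>
        opeq S (opmul S Q (opmul S A P)) (\<lambda>x y. if x = y then ev x else 0))"

definition lift :: "'s set \<Rightarrow> 's set \<Rightarrow> ('s, 'b::finite) kop \<Rightarrow> ('s, 'b) kop" where
  "lift S T A x y = A (restrict x T) (restrict y T) * (if (\<forall>s\<in>S - T. x s = y s) then 1 else 0)"

definition loc :: "'s set \<Rightarrow> 'b::finite k3 \<Rightarrow> 's \<Rightarrow> 's \<Rightarrow> 's \<Rightarrow> ('s, 'b) kop" where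
  "loc S K a b c = lift S {a, b, c} (\<lambda>x y. K (x a, x b, x c) (y a, y b, y c))"

definition merge :: "'s set \<Rightarrow> ('s \<Rightarrow> 'b) \<Rightarrow> ('s \<Rightarrow> 'b) \<Rightarrow> 's \<Rightarrow> 'b" where
  "merge T x z = (\<lambda>s. if s \<in> T then z s else x s)"

text \<open>Partial trace over the slots T; the result is an operator on S - T.\<close>
definition ptrace :: "'s set \<Rightarrow> 's set \<Rightarrow> ('s, 'b::finite) kop \<Rightarrow> ('s, 'b) kop" where
  "ptrace S T A x y = (\<Sum>z\<in>states T. A (merge T x z) (merge T y z))"

text \<open>Bicolored tetrahedron equation BTE[sigma]; planes are labelled 1,2,3,4 (nat).\<close>
definition BTE :: "(bit \<Rightarrow> 'c \<Rightarrow> 'c \<Rightarrow> 'c \<Rightarrow> 'b::finite k3) \<Rightarrow> (bit \<Rightarrow> 'c \<Rightarrow> 'c \<Rightarrow> 'c \<Rightarrow> 'b k3) \<Rightarrow>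
    (bit \<Rightarrow> 'c \<Rightarrow> 'c \<Rightarrow> 'c \<Rightarrow> 'b k3) \<Rightarrow> (bit \<Rightarrow> 'c \<Rightarrow> 'c \<Rightarrow> 'c \<Rightarrow> 'b k3) \<Rightarrow> bit \<Rightarrow> bool" where
  "BTE R R1 R2 R3 \<sigma> \<longleftrightarrow>
    (\<forall>p1 p2 p3 p4.
      let S = {(1::nat, 2::nat), (1, 3), (1, 4), (2, 3), (2, 4), (3, 4)} in
      opeq S
        (opprod S [loc S (R \<sigma> p1 p2 p3) (1, 2) (1, 3) (2, 3),
                   loc S (R1 (\<sigma> + 1) p1 p2 p4) (1, 2) (1, 4) (2, 4),
                   loc S (R2 \<sigma> p1 p3 p4) (1, 3) (1, 4) (3, 4),
                   loc S (R3 (\<sigma> + 1) p2 p3 p4) (2, 3) (2, 4) (3, 4)])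
        (opprod S [loc S (R3 \<sigma> p2 p3 p4) (2, 3) (2, 4) (3, 4),
                   loc S (R2 (\<sigma> + 1) p1 p3 p4) (1, 3) (1, 4) (3, 4),
                   loc S (R1 \<sigma> p1 p2 p4) (1, 2) (1, 4) (2, 4),
                   loc S (R (\<sigma> + 1) p1 p2 p3) (1, 2) (1, 3) (2, 3)]))"

definition k3_invertible :: "'b::finite k3 \<Rightarrow> bool" where
  "k3_invertible K \<longleftrightarrow>
    (let S = {(1::nat, 2::nat), (1, 3), (2, 3)} in op_invertible S (loc S K (1, 2) (1, 3) (2, 3)))"

text \<open>Planes: One l (l = 1..2L), Two m (m = 1..2M), and extra planes Three < Four
larger than all of them.\<close>
datatype plane = One nat | Two nat | Three | Four

type_synonym slot = "plane \<times> plane"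

definition TS :: "nat \<Rightarrow> plane \<Rightarrow> plane \<Rightarrow> slot set" where
  "TS L \<alpha> \<beta> = {(One l, \<alpha>) | l. l \<in> {1..2*L}} \<union> {(One l, \<beta>) | l. l \<in> {1..2*L}}"

text \<open>Trace reduction bold X^[sigma]_{alpha beta}, planes alpha < beta with parameters pa, pb;
r1 l is the parameter of plane 1_l. Operator on the slots TS L alpha beta.\<close>
definition trred :: "(bit \<Rightarrow> 'c \<Rightarrow> 'c \<Rightarrow> 'c \<Rightarrow> 'b::finite k3) \<Rightarrow> nat \<Rightarrow> (nat \<Rightarrow> 'c) \<Rightarrow> bit \<Rightarrow>
     plane \<Rightarrow> plane \<Rightarrow> 'c \<Rightarrow> 'c \<Rightarrow> (slot, 'b) kop" where
  "trred X L r1 \<sigma> \<alpha> \<beta> pa pb =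
    (let S = TS L \<alpha> \<beta> \<union> {(\<alpha>, \<beta>)} in
     ptrace S {(\<alpha>, \<beta>)}
       (opprod S (map (\<lambda>l. loc S (X (\<sigma> + of_nat l) (r1 l) pa pb) (One l, \<alpha>) (One l, \<beta>) (\<alpha>, \<beta>))
                      [1..<2*L+1])))"

definition Wslots :: "nat \<Rightarrow> nat \<Rightarrow> slot set" where
  "Wslots L M = {(One l, Two m) | l m. l \<in> {1..2*L} \<and> m \<in> {1..2*M}}"

definition transfer :: "(bit \<Rightarrow> 'c \<Rightarrow> 'c \<Rightarrow> 'c \<Rightarrow> 'b::finite k3) \<Rightarrow> nat \<Rightarrow> nat \<Rightarrow>
     (nat \<Rightarrow> 'c) \<Rightarrow> (nat \<Rightarrow> 'c) \<Rightarrow> bit \<Rightarrow> 'c \<Rightarrow> (slot, 'b) kop" where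
  "transfer X L M r1 r2 \<sigma> r =
    (let T3 = {(One l, Three) | l. l \<in> {1..2*L}};
         S = Wslots L M \<union> T3 in
     ptrace S T3
       (opprod S (map (\<lambda>m. lift S (TS L (Two m) Three)
                              (trred X L r1 (\<sigma> + of_nat m) (Two m) Three (r2 m) r))
                      [1..<2*M+1])))"

definition transfer2 :: "(bit \<Rightarrow> 'c \<Rightarrow> 'c \<Rightarrow> 'c \<Rightarrow> 'b::finite k3) \<Rightarrow> nat \<Rightarrow> nat \<Rightarrow>
     (nat \<Rightarrow> 'c) \<Rightarrow> (nat \<Rightarrow> 'c) \<Rightarrow> 'c \<Rightarrow> 'c \<Rightarrow> (slot, 'b) kop" where
  "transfer2 X L M r1 r2 r r' =
     opmul (Wslots L M) (transfer X L M r1 r2 0 r) (transfer X L M r1 r2 1 r')"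

end

theory Submission
  imports Defs
begin

text \<open>
  Tracing the bicoloured tetrahedron equations for the planes \<open>1\<^sub>l < 2\<^sub>m < 3 < 4\<close> over the
  \<open>2L\<close> planes \<open>1\<^sub>l\<close> gives a three-term relation between trace-reduced operators: the operators
  \<open>R3\<close> on the internal slots telescope, and since the colour returns after an even number of steps
  and \<open>R3\<close> is invertible they form a conjugation, which the trace removes. Tracing this relation
  over the \<open>2M\<close> planes \<open>2\<^sub>m\<close> in the same way, now with the invertible trace reductions of \<open>R2\<close>
  telescoping, gives the exchange relation \<open>T(\<sigma>, p) T1(\<sigma> + 1, q) = T1(\<sigma>, q) T(\<sigma> + 1, p)\<close>
  between the layer transfer matrices \<open>T\<close> of \<open>R\<close> and \<open>T1\<close> of \<open>R1\<close>. Four such exchanges show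
  that every two-layer transfer matrix of \<open>R\<close> commutes with every two-layer transfer matrix of
  \<open>R1\<close>. If one of the latter is diagonalizable with simple spectrum, everything commuting with it is
  diagonal in its eigenbasis, so the two-layer transfer matrices of \<open>R\<close> commute with each other.
\<close>

abbreviation opmul_in :: "('s, 'b::finite) kop \<Rightarrow> 's set \<Rightarrow> ('s, 'b) kop \<Rightarrow> ('s, 'b) kop"
    ("(_ \<cdot>\<^bsub>_\<^esub> _)" [70, 0, 71] 70)
  where "A \<cdot>\<^bsub>S\<^esub> B \<equiv> opmul S A B"

abbreviation opeq_in :: "('s, 'b::finite) kop \<Rightarrow> 's set \<Rightarrow> ('s, 'b) kop \<Rightarrow> bool"
    ("(_ \<approx>\<^bsub>_\<^esub> _)" [51, 0, 51] 50)
  where "A \<approx>\<^bsub>S\<^esub> B \<equiv> opeq S A B"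

lemma states_iff: "x \<in> states S \<longleftrightarrow> (\<forall>s. s \<notin> S \<longrightarrow> x s = undefined)"
  by (auto simp: states_def PiE_def extensional_def)

lemma finite_states: "finite S \<Longrightarrow> finite (states S :: ('s \<Rightarrow> 'b::finite) set)"
  unfolding states_def by (rule finite_PiE) auto

lemma restrict_in_states [simp]: "restrict x T \<in> states T"
  by (simp add: states_iff)

lemma restrict_states_id: "x \<in> states S \<Longrightarrow> restrict x S = x"
  by (auto simp: states_iff restrict_def)

lemma merge_in_states: "x \<in> states (S - T) \<Longrightarrow> z \<in> states T \<Longrightarrow> T \<subseteq> S \<Longrightarrow> merge T x z \<in> states S"
  by (auto simp: states_iff merge_def)

lemma merge_apply_in [simp]: "s \<in> T \<Longrightarrow> merge T x z s = z s"
  by (simp add: merge_def)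

lemma merge_apply_out [simp]: "s \<notin> T \<Longrightarrow> merge T x z s = x s"
  by (simp add: merge_def)

lemma restrict_merge_in [simp]: "z \<in> states T \<Longrightarrow> restrict (merge T x z) T = z"
  by (auto simp: states_iff restrict_def)

lemma restrict_merge_out: "U \<inter> T = {} \<Longrightarrow> restrict (merge T x z) U = restrict x U"
  by (auto simp: merge_def restrict_def fun_eq_iff)

lemma merge_merge_same [simp]: "merge T (merge T x w) a = merge T x a"
  by (auto simp: merge_def)

lemma merge_restrict_compl: "x \<in> states S \<Longrightarrow> merge T (restrict x (S - T)) z = merge T x z"
  by (auto simp: merge_def restrict_def states_iff)

lemma merge_commute: "V \<inter> T = {} \<Longrightarrow> merge V (merge T x w) a = merge T (merge V x a) w"
  by (auto simp: merge_def fun_eq_iff)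

lemma bij_betw_merge_states:
  assumes "T \<subseteq> S"
  shows "bij_betw (\<lambda>(u, w). merge T u w) (states (S - T) \<times> states T) (states S)"
proof (rule bij_betw_imageI)
  show "inj_on (\<lambda>(u, w). merge T u w) (states (S - T) \<times> states T)"
  proof (rule inj_onI, clarsimp)
    fix u w u' w'
    assume "u \<in> states (S - T)" "w \<in> states T" "u' \<in> states (S - T)" "w' \<in> states T"
      and "merge T u w = merge T u' w'"
    then have "u s = u' s \<and> w s = w' s" for s
      by (cases "s \<in> T") (auto simp: states_iff dest: fun_cong[of _ _ s])
    then show "u = u' \<and> w = w'" by auto
  qed
  have "x \<in> (\<lambda>(u, w). merge T u w) ` (states (S - T) \<times> states T)" if "x \<in> states S" for x
  proof (rule image_eqI)
    show "x = (\<lambda>(u, w). merge T u w) (restrict x (S - T), restrict x T)"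
      using that assms by (auto simp: merge_def restrict_def states_iff)
  qed simp
  then show "(\<lambda>(u, w). merge T u w) ` (states (S - T) \<times> states T) = states S"
    using assms by (auto intro: merge_in_states)
qed

lemma sum_states_split:
  assumes "T \<subseteq> S"
  shows "sum f (states S) = (\<Sum>u\<in>states (S - T). \<Sum>w\<in>states T. f (merge T u w))"
  using sum.reindex_bij_betw[OF bij_betw_merge_states[OF assms], of f]
  by (simp add: sum.cartesian_product case_prod_beta)

lemma sum_states_delta:
  assumes "finite T"
  shows "(\<Sum>a\<in>states T. if \<forall>s\<in>T. a s = y s then f a else 0) = f (restrict y T)"
proof -
  have "a \<in> states T \<Longrightarrow> (\<forall>s\<in>T. a s = y s) \<longleftrightarrow> a = restrict y T" for a
    by (auto simp: states_iff restrict_def fun_eq_iff)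
  then have "(\<Sum>a\<in>states T. if \<forall>s\<in>T. a s = y s then f a else 0)
      = (\<Sum>a\<in>states T. if a = restrict y T then f a else 0)"
    by (intro sum.cong) auto
  then show ?thesis
    using assms by (simp add: sum.delta' finite_states)
qed

section \<open>The operator algebra on a fixed set of slots\<close>

lemma opeq_refl [simp]: "A \<approx>\<^bsub>S\<^esub> A"
  by (simp add: opeq_def)

lemma opeq_sym: "A \<approx>\<^bsub>S\<^esub> B \<Longrightarrow> B \<approx>\<^bsub>S\<^esub> A"
  by (simp add: opeq_def)

lemma opeq_trans [trans]: "A \<approx>\<^bsub>S\<^esub> B \<Longrightarrow> B \<approx>\<^bsub>S\<^esub> C \<Longrightarrow> A \<approx>\<^bsub>S\<^esub> C"
  by (simp add: opeq_def)

text \<open>Without these, calculations mixing \<open>=\<close> and \<open>\<approx>\<close> fall back to higher-order substitution,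
  which may diverge.\<close>

lemma eq_opeq_trans [trans]: "A = B \<Longrightarrow> B \<approx>\<^bsub>S\<^esub> C \<Longrightarrow> A \<approx>\<^bsub>S\<^esub> C"
  by simp

lemma opeq_eq_trans [trans]: "A \<approx>\<^bsub>S\<^esub> B \<Longrightarrow> B = C \<Longrightarrow> A \<approx>\<^bsub>S\<^esub> C"
  by simp

lemma opeqD: "A \<approx>\<^bsub>S\<^esub> B \<Longrightarrow> x \<in> states S \<Longrightarrow> y \<in> states S \<Longrightarrow> A x y = B x y"
  by (simp add: opeq_def)

lemma opmul_cong: "A \<approx>\<^bsub>S\<^esub> A' \<Longrightarrow> B \<approx>\<^bsub>S\<^esub> B' \<Longrightarrow> A \<cdot>\<^bsub>S\<^esub> B \<approx>\<^bsub>S\<^esub> A' \<cdot>\<^bsub>S\<^esub> B'"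
  by (simp add: opeq_def opmul_def)

lemma opmul_congL: "A \<approx>\<^bsub>S\<^esub> A' \<Longrightarrow> A \<cdot>\<^bsub>S\<^esub> B \<approx>\<^bsub>S\<^esub> A' \<cdot>\<^bsub>S\<^esub> B"
  by (simp add: opmul_cong)

lemma opmul_congR: "B \<approx>\<^bsub>S\<^esub> B' \<Longrightarrow> A \<cdot>\<^bsub>S\<^esub> B \<approx>\<^bsub>S\<^esub> A \<cdot>\<^bsub>S\<^esub> B'"
  by (simp add: opmul_cong)

text \<open>Associativity holds on the nose, not only on the states, so it can be used for rewriting.\<close>

lemma opmul_assoc: "A \<cdot>\<^bsub>S\<^esub> B \<cdot>\<^bsub>S\<^esub> C = A \<cdot>\<^bsub>S\<^esub> (B \<cdot>\<^bsub>S\<^esub> C)"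
  unfolding opmul_def
  by (auto simp: fun_eq_iff sum_distrib_left sum_distrib_right mult.assoc intro: sum.swap)

lemma opid_opmul:
  assumes "finite S"
  shows "opid S \<cdot>\<^bsub>S\<^esub> A \<approx>\<^bsub>S\<^esub> A"
proof -
  have "(opid S \<cdot>\<^bsub>S\<^esub> A) x y = A x y" if "x \<in> states S" for x y
  proof -
    have "(opid S \<cdot>\<^bsub>S\<^esub> A) x y = (\<Sum>z\<in>states S. if x = z then A z y else 0)"
      unfolding opmul_def opid_def by (intro sum.cong) auto
    then show ?thesis
      using that assms by (simp add: finite_states)
  qed
  then show ?thesis
    by (simp add: opeq_def)
qed

lemma opmul_opid:
  assumes "finite S"
  shows "A \<cdot>\<^bsub>S\<^esub> opid S \<approx>\<^bsub>S\<^esub> A"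
proof -
  have "(A \<cdot>\<^bsub>S\<^esub> opid S) x y = A x y" if "y \<in> states S" for x y
  proof -
    have "(A \<cdot>\<^bsub>S\<^esub> opid S) x y = (\<Sum>z\<in>states S. if y = z then A x z else 0)"
      unfolding opmul_def opid_def by (intro sum.cong) auto
    then show ?thesis
      using that assms by (simp add: finite_states)
  qed
  then show ?thesis
    by (simp add: opeq_def)
qed

lemma opmul_cancel_right:
  assumes "finite S" "A \<cdot>\<^bsub>S\<^esub> B \<approx>\<^bsub>S\<^esub> opid S"
  shows "X \<cdot>\<^bsub>S\<^esub> A \<cdot>\<^bsub>S\<^esub> B \<approx>\<^bsub>S\<^esub> X"
  unfolding opmul_assoc
  using opeq_trans[OF opmul_congR[OF assms(2)] opmul_opid[OF assms(1)]] .

lemma opprod_Nil [simp]: "opprod S [] = opid S"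
  by (simp add: opprod_def)

lemma opprod_Cons [simp]: "opprod S (A # As) = A \<cdot>\<^bsub>S\<^esub> opprod S As"
  by (simp add: opprod_def)

lemma opprod_append:
  assumes "finite S"
  shows "opprod S (As @ Bs) \<approx>\<^bsub>S\<^esub> opprod S As \<cdot>\<^bsub>S\<^esub> opprod S Bs"
proof (induction As)
  case Nil
  show ?case
    using opeq_sym[OF opid_opmul[OF assms]] by simp
next
  case (Cons A As)
  then show ?case
    by (simp add: opmul_assoc opmul_congR)
qed

lemma opprod_snoc:
  assumes "finite S"
  shows "opprod S (As @ [A]) \<approx>\<^bsub>S\<^esub> opprod S As \<cdot>\<^bsub>S\<^esub> A"
proof -
  have "opprod S (As @ [A]) \<approx>\<^bsub>S\<^esub> opprod S As \<cdot>\<^bsub>S\<^esub> (A \<cdot>\<^bsub>S\<^esub> opid S)"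
    using opprod_append[OF assms, of As "[A]"] by simp
  also have "\<dots> \<approx>\<^bsub>S\<^esub> opprod S As \<cdot>\<^bsub>S\<^esub> A"
    by (rule opmul_congR[OF opmul_opid[OF assms]])
  finally show ?thesis .
qed

lemma opprod_map_cong:
  "(\<And>x. x \<in> set xs \<Longrightarrow> f x \<approx>\<^bsub>S\<^esub> g x) \<Longrightarrow> opprod S (map f xs) \<approx>\<^bsub>S\<^esub> opprod S (map g xs)"
  by (induction xs) (auto intro: opmul_cong)

lemma opprod_commute:
  assumes "finite S" "\<And>A. A \<in> set As \<Longrightarrow> A \<cdot>\<^bsub>S\<^esub> X \<approx>\<^bsub>S\<^esub> X \<cdot>\<^bsub>S\<^esub> A"
  shows "opprod S As \<cdot>\<^bsub>S\<^esub> X \<approx>\<^bsub>S\<^esub> X \<cdot>\<^bsub>S\<^esub> opprod S As"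
  using assms(2)
proof (induction As)
  case Nil
  show ?case
    using opeq_trans[OF opid_opmul[OF assms(1)] opeq_sym[OF opmul_opid[OF assms(1)]]] by simp
next
  case (Cons A As)
  have "opprod S (A # As) \<cdot>\<^bsub>S\<^esub> X \<approx>\<^bsub>S\<^esub> A \<cdot>\<^bsub>S\<^esub> (X \<cdot>\<^bsub>S\<^esub> opprod S As)"
    using Cons by (simp add: opmul_assoc opmul_congR)
  also have "\<dots> \<approx>\<^bsub>S\<^esub> X \<cdot>\<^bsub>S\<^esub> A \<cdot>\<^bsub>S\<^esub> opprod S As"
    unfolding opmul_assoc[symmetric] using Cons.prems by (simp add: opmul_congL)
  finally show ?case
    by (simp add: opmul_assoc)
qed

lemma opprod_map_mult:
  assumes "finite S" "distinct xs"
    and "\<And>i j. i \<in> set xs \<Longrightarrow> j \<in> set xs \<Longrightarrow> i \<noteq> j \<Longrightarrow> b i \<cdot>\<^bsub>S\<^esub> a j \<approx>\<^bsub>S\<^esub> a j \<cdot>\<^bsub>S\<^esub> b i"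
  shows "opprod S (map (\<lambda>i. a i \<cdot>\<^bsub>S\<^esub> b i) xs) \<approx>\<^bsub>S\<^esub>
    opprod S (map a xs) \<cdot>\<^bsub>S\<^esub> opprod S (map b xs)"
  using assms(2,3)
proof (induction xs)
  case Nil
  show ?case
    using opeq_sym[OF opid_opmul[OF assms(1)]] by simp
next
  case (Cons x xs)
  let ?A = "opprod S (map a xs)" and ?B = "opprod S (map b xs)"
  have "opprod S (map (\<lambda>i. a i \<cdot>\<^bsub>S\<^esub> b i) (x # xs)) \<approx>\<^bsub>S\<^esub> a x \<cdot>\<^bsub>S\<^esub> (b x \<cdot>\<^bsub>S\<^esub> ?A \<cdot>\<^bsub>S\<^esub> ?B)"
    using Cons by (simp add: opmul_assoc opmul_congR)
  also have "\<dots> \<approx>\<^bsub>S\<^esub> a x \<cdot>\<^bsub>S\<^esub> (?A \<cdot>\<^bsub>S\<^esub> b x \<cdot>\<^bsub>S\<^esub> ?B)"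
  proof (intro opmul_congR opmul_congL opeq_sym[OF opprod_commute[OF assms(1)]])
    fix A assume "A \<in> set (map a xs)"
    then obtain j where "j \<in> set xs" "A = a j"
      by auto
    then show "A \<cdot>\<^bsub>S\<^esub> b x \<approx>\<^bsub>S\<^esub> b x \<cdot>\<^bsub>S\<^esub> A"
      using Cons.prems by (metis distinct.simps(2) list.set_intros opeq_sym)
  qed
  finally show ?case
    by (simp add: opmul_assoc)
qed

lemma opmul_commute_opmul:
  assumes "X \<cdot>\<^bsub>S\<^esub> A \<approx>\<^bsub>S\<^esub> A \<cdot>\<^bsub>S\<^esub> X" "X \<cdot>\<^bsub>S\<^esub> B \<approx>\<^bsub>S\<^esub> B \<cdot>\<^bsub>S\<^esub> X"
  shows "X \<cdot>\<^bsub>S\<^esub> (A \<cdot>\<^bsub>S\<^esub> B) \<approx>\<^bsub>S\<^esub> A \<cdot>\<^bsub>S\<^esub> B \<cdot>\<^bsub>S\<^esub> X"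
proof -
  have "X \<cdot>\<^bsub>S\<^esub> (A \<cdot>\<^bsub>S\<^esub> B) \<approx>\<^bsub>S\<^esub> A \<cdot>\<^bsub>S\<^esub> X \<cdot>\<^bsub>S\<^esub> B"
    unfolding opmul_assoc[symmetric] by (rule opmul_congL[OF assms(1)])
  also have "\<dots> \<approx>\<^bsub>S\<^esub> A \<cdot>\<^bsub>S\<^esub> B \<cdot>\<^bsub>S\<^esub> X"
    unfolding opmul_assoc by (rule opmul_congR[OF assms(2)])
  finally show ?thesis .
qed

lemma opprod_map_mult3:
  assumes "finite S" "distinct xs"
    and "\<And>i j. i \<in> set xs \<Longrightarrow> j \<in> set xs \<Longrightarrow> i \<noteq> j \<Longrightarrow>
      b i \<cdot>\<^bsub>S\<^esub> a j \<approx>\<^bsub>S\<^esub> a j \<cdot>\<^bsub>S\<^esub> b i \<and> c i \<cdot>\<^bsub>S\<^esub> a j \<approx>\<^bsub>S\<^esub> a j \<cdot>\<^bsub>S\<^esub> c i \<and>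
      c i \<cdot>\<^bsub>S\<^esub> b j \<approx>\<^bsub>S\<^esub> b j \<cdot>\<^bsub>S\<^esub> c i"
  shows "opprod S (map (\<lambda>i. a i \<cdot>\<^bsub>S\<^esub> b i \<cdot>\<^bsub>S\<^esub> c i) xs) \<approx>\<^bsub>S\<^esub>
    opprod S (map a xs) \<cdot>\<^bsub>S\<^esub> opprod S (map b xs) \<cdot>\<^bsub>S\<^esub> opprod S (map c xs)"
proof -
  have "opprod S (map (\<lambda>i. a i \<cdot>\<^bsub>S\<^esub> b i \<cdot>\<^bsub>S\<^esub> c i) xs) \<approx>\<^bsub>S\<^esub>
      opprod S (map (\<lambda>i. a i \<cdot>\<^bsub>S\<^esub> b i) xs) \<cdot>\<^bsub>S\<^esub> opprod S (map c xs)"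
    using assms(3) by (intro opprod_map_mult[OF assms(1,2)] opmul_commute_opmul) auto
  also have "\<dots> \<approx>\<^bsub>S\<^esub> opprod S (map a xs) \<cdot>\<^bsub>S\<^esub> opprod S (map b xs) \<cdot>\<^bsub>S\<^esub> opprod S (map c xs)"
    using assms(3) by (intro opmul_congL opprod_map_mult[OF assms(1,2)]) auto
  finally show ?thesis .
qed

lemma opprod_intertwine:
  assumes "finite S" "m \<le> n"
    and "\<And>l. m \<le> l \<Longrightarrow> l < n \<Longrightarrow> X l \<cdot>\<^bsub>S\<^esub> P (Suc l) \<approx>\<^bsub>S\<^esub> P l \<cdot>\<^bsub>S\<^esub> Y l"
  shows "opprod S (map X [m..<n]) \<cdot>\<^bsub>S\<^esub> P n \<approx>\<^bsub>S\<^esub> P m \<cdot>\<^bsub>S\<^esub> opprod S (map Y [m..<n])"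
  using assms(2)
proof (induction n rule: dec_induct)
  case base
  show ?case
    using opeq_trans[OF opid_opmul[OF assms(1)] opeq_sym[OF opmul_opid[OF assms(1)]]] by simp
next
  case (step k)
  let ?X = "opprod S (map X [m..<k])" and ?Y = "opprod S (map Y [m..<k])"
  have "opprod S (map X [m..<Suc k]) \<cdot>\<^bsub>S\<^esub> P (Suc k) = opprod S (map X [m..<k] @ [X k]) \<cdot>\<^bsub>S\<^esub> P (Suc k)"
    using step.hyps(1) by simp
  also have "\<dots> \<approx>\<^bsub>S\<^esub> ?X \<cdot>\<^bsub>S\<^esub> (X k \<cdot>\<^bsub>S\<^esub> P (Suc k))"
    unfolding opmul_assoc[symmetric] by (rule opmul_congL[OF opprod_snoc[OF assms(1)]])
  also have "\<dots> \<approx>\<^bsub>S\<^esub> ?X \<cdot>\<^bsub>S\<^esub> P k \<cdot>\<^bsub>S\<^esub> Y k"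
    unfolding opmul_assoc using step.hyps by (intro opmul_congR assms(3))
  also have "\<dots> \<approx>\<^bsub>S\<^esub> P m \<cdot>\<^bsub>S\<^esub> (?Y \<cdot>\<^bsub>S\<^esub> Y k)"
    unfolding opmul_assoc[symmetric] by (rule opmul_congL[OF step.IH])
  also have "\<dots> \<approx>\<^bsub>S\<^esub> P m \<cdot>\<^bsub>S\<^esub> opprod S (map Y [m..<k] @ [Y k])"
    by (rule opmul_congR[OF opeq_sym[OF opprod_snoc[OF assms(1)]]])
  also have "\<dots> = P m \<cdot>\<^bsub>S\<^esub> opprod S (map Y [m..<Suc k])"
    using step.hyps(1) by simp
  finally show ?case .
qed

lemma exchange_commute:
  fixes X Y :: "bit \<Rightarrow> 'p \<Rightarrow> ('s, 'b::finite) kop"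
  assumes "\<And>\<sigma> p q. X \<sigma> p \<cdot>\<^bsub>S\<^esub> Y (\<sigma> + 1) q \<approx>\<^bsub>S\<^esub> Y \<sigma> q \<cdot>\<^bsub>S\<^esub> X (\<sigma> + 1) p"
  shows "X 0 u \<cdot>\<^bsub>S\<^esub> X 1 u' \<cdot>\<^bsub>S\<^esub> (Y 0 t \<cdot>\<^bsub>S\<^esub> Y 1 t') \<approx>\<^bsub>S\<^esub>
    Y 0 t \<cdot>\<^bsub>S\<^esub> Y 1 t' \<cdot>\<^bsub>S\<^esub> (X 0 u \<cdot>\<^bsub>S\<^esub> X 1 u')"
proof -
  have e0: "X 0 p \<cdot>\<^bsub>S\<^esub> Y 1 q \<approx>\<^bsub>S\<^esub> Y 0 q \<cdot>\<^bsub>S\<^esub> X 1 p" for p q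
    using assms[of 0] by simp
  have e1: "X 1 p \<cdot>\<^bsub>S\<^esub> Y 0 q \<approx>\<^bsub>S\<^esub> Y 1 q \<cdot>\<^bsub>S\<^esub> X 0 p" for p q
    using assms[of 1] by simp
  have "X 0 u \<cdot>\<^bsub>S\<^esub> X 1 u' \<cdot>\<^bsub>S\<^esub> (Y 0 t \<cdot>\<^bsub>S\<^esub> Y 1 t')
      = X 0 u \<cdot>\<^bsub>S\<^esub> (X 1 u' \<cdot>\<^bsub>S\<^esub> Y 0 t) \<cdot>\<^bsub>S\<^esub> Y 1 t'"
    by (simp add: opmul_assoc)
  also have "\<dots> \<approx>\<^bsub>S\<^esub> X 0 u \<cdot>\<^bsub>S\<^esub> (Y 1 t \<cdot>\<^bsub>S\<^esub> X 0 u') \<cdot>\<^bsub>S\<^esub> Y 1 t'"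
    by (intro opmul_congL opmul_congR e1)
  also have "\<dots> = X 0 u \<cdot>\<^bsub>S\<^esub> Y 1 t \<cdot>\<^bsub>S\<^esub> (X 0 u' \<cdot>\<^bsub>S\<^esub> Y 1 t')"
    by (simp add: opmul_assoc)
  also have "\<dots> \<approx>\<^bsub>S\<^esub> Y 0 t \<cdot>\<^bsub>S\<^esub> X 1 u \<cdot>\<^bsub>S\<^esub> (Y 0 t' \<cdot>\<^bsub>S\<^esub> X 1 u')"
    by (intro opmul_cong e0)
  also have "\<dots> = Y 0 t \<cdot>\<^bsub>S\<^esub> (X 1 u \<cdot>\<^bsub>S\<^esub> Y 0 t') \<cdot>\<^bsub>S\<^esub> X 1 u'"
    by (simp add: opmul_assoc)
  also have "\<dots> \<approx>\<^bsub>S\<^esub> Y 0 t \<cdot>\<^bsub>S\<^esub> (Y 1 t' \<cdot>\<^bsub>S\<^esub> X 0 u) \<cdot>\<^bsub>S\<^esub> X 1 u'"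
    by (intro opmul_congL opmul_congR e1)
  also have "\<dots> = Y 0 t \<cdot>\<^bsub>S\<^esub> Y 1 t' \<cdot>\<^bsub>S\<^esub> (X 0 u \<cdot>\<^bsub>S\<^esub> X 1 u')"
    by (simp add: opmul_assoc)
  finally show ?thesis .
qed

subsection \<open>Commutants of operators with simple spectrum\<close>

definition diag_op :: "(('s \<Rightarrow> 'b) \<Rightarrow> complex) \<Rightarrow> ('s, 'b) kop" where
  "diag_op ev x y = (if x = y then ev x else 0)"

definition op_diagonal :: "'s set \<Rightarrow> ('s, 'b::finite) kop \<Rightarrow> bool" where
  "op_diagonal S B \<longleftrightarrow> (\<forall>x\<in>states S. \<forall>y\<in>states S. x \<noteq> y \<longrightarrow> B x y = 0)"

lemma simple_diagonalizable_diag_op: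
  "simple_diagonalizable S A \<longleftrightarrow>
     (\<exists>P Q ev. P \<cdot>\<^bsub>S\<^esub> Q \<approx>\<^bsub>S\<^esub> opid S \<and> Q \<cdot>\<^bsub>S\<^esub> P \<approx>\<^bsub>S\<^esub> opid S \<and>
        inj_on ev (states S) \<and> Q \<cdot>\<^bsub>S\<^esub> A \<cdot>\<^bsub>S\<^esub> P \<approx>\<^bsub>S\<^esub> diag_op ev)"
  by (simp add: simple_diagonalizable_def opmul_assoc diag_op_def[abs_def])

lemma opmul_diag_op_right:
  assumes "finite S" "y \<in> states S"
  shows "(B \<cdot>\<^bsub>S\<^esub> diag_op ev) x y = B x y * ev y"
proof -
  have "(B \<cdot>\<^bsub>S\<^esub> diag_op ev) x y = (\<Sum>z\<in>states S. if y = z then B x z * ev z else 0)"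
    unfolding opmul_def diag_op_def by (intro sum.cong) auto
  then show ?thesis
    using assms by (simp add: finite_states)
qed

lemma opmul_diag_op_left:
  assumes "finite S" "x \<in> states S"
  shows "(diag_op ev \<cdot>\<^bsub>S\<^esub> B) x y = ev x * B x y"
proof -
  have "(diag_op ev \<cdot>\<^bsub>S\<^esub> B) x y = (\<Sum>z\<in>states S. if x = z then ev z * B z y else 0)"
    unfolding opmul_def diag_op_def by (intro sum.cong) auto
  then show ?thesis
    using assms by (simp add: finite_states)
qed

lemma op_diagonal_if_commute_diag_op:
  fixes B :: "('s, 'b::finite) kop"
  assumes "finite S" "inj_on ev (states S)"
    and "B \<cdot>\<^bsub>S\<^esub> diag_op ev \<approx>\<^bsub>S\<^esub> diag_op ev \<cdot>\<^bsub>S\<^esub> B"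
  shows "op_diagonal S B"
  unfolding op_diagonal_def
proof (intro ballI impI)
  fix x y :: "'s \<Rightarrow> 'b"
  assume x: "x \<in> states S" and y: "y \<in> states S" and "x \<noteq> y"
  have "B x y * ev y = ev x * B x y"
    using opeqD[OF assms(3) x y] by (simp add: opmul_diag_op_right[OF assms(1) y] opmul_diag_op_left[OF assms(1) x])
  moreover have "ev y \<noteq> ev x"
    using assms(2) x y \<open>x \<noteq> y\<close> by (auto dest: inj_onD)
  ultimately show "B x y = 0"
    by (simp add: mult.commute)
qed

lemma op_diagonal_commute:
  fixes B C :: "('s, 'b::finite) kop"
  assumes "finite S" "op_diagonal S B" "op_diagonal S C"
  shows "B \<cdot>\<^bsub>S\<^esub> C \<approx>\<^bsub>S\<^esub> C \<cdot>\<^bsub>S\<^esub> B"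
proof -
  have diag_mult: "(F \<cdot>\<^bsub>S\<^esub> G) x y = (if x = y then F x x * G x x else 0)"
    if "op_diagonal S F" "op_diagonal S G" "x \<in> states S" "y \<in> states S" for F G :: "('s, 'b) kop" and x y
  proof -
    have "(F \<cdot>\<^bsub>S\<^esub> G) x y = (\<Sum>z\<in>states S. if x = z then F x z * G z y else 0)"
      unfolding opmul_def using that by (intro sum.cong) (auto simp: op_diagonal_def)
    then show ?thesis
      using that assms(1) by (auto simp: finite_states op_diagonal_def)
  qed
  show ?thesis
    using assms by (simp add: opeq_def diag_mult mult.commute)
qed

lemma conj_opmul:
  assumes "finite S" "P \<cdot>\<^bsub>S\<^esub> Q \<approx>\<^bsub>S\<^esub> opid S"
  shows "Q \<cdot>\<^bsub>S\<^esub> U \<cdot>\<^bsub>S\<^esub> P \<cdot>\<^bsub>S\<^esub> (Q \<cdot>\<^bsub>S\<^esub> V \<cdot>\<^bsub>S\<^esub> P) \<approx>\<^bsub>S\<^esub> Q \<cdot>\<^bsub>S\<^esub> (U \<cdot>\<^bsub>S\<^esub> V) \<cdot>\<^bsub>S\<^esub> P"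
proof -
  have "Q \<cdot>\<^bsub>S\<^esub> U \<cdot>\<^bsub>S\<^esub> P \<cdot>\<^bsub>S\<^esub> (Q \<cdot>\<^bsub>S\<^esub> V \<cdot>\<^bsub>S\<^esub> P) = Q \<cdot>\<^bsub>S\<^esub> U \<cdot>\<^bsub>S\<^esub> P \<cdot>\<^bsub>S\<^esub> Q \<cdot>\<^bsub>S\<^esub> (V \<cdot>\<^bsub>S\<^esub> P)"
    by (simp add: opmul_assoc)
  also have "\<dots> \<approx>\<^bsub>S\<^esub> Q \<cdot>\<^bsub>S\<^esub> U \<cdot>\<^bsub>S\<^esub> (V \<cdot>\<^bsub>S\<^esub> P)"
    by (rule opmul_congL[OF opmul_cancel_right[OF assms]])
  also have "\<dots> = Q \<cdot>\<^bsub>S\<^esub> (U \<cdot>\<^bsub>S\<^esub> V) \<cdot>\<^bsub>S\<^esub> P"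
    by (simp add: opmul_assoc)
  finally show ?thesis .
qed

lemma conj_conj_cancel:
  assumes "finite S" "P \<cdot>\<^bsub>S\<^esub> Q \<approx>\<^bsub>S\<^esub> opid S"
  shows "P \<cdot>\<^bsub>S\<^esub> (Q \<cdot>\<^bsub>S\<^esub> X \<cdot>\<^bsub>S\<^esub> P) \<cdot>\<^bsub>S\<^esub> Q \<approx>\<^bsub>S\<^esub> X"
proof -
  have "P \<cdot>\<^bsub>S\<^esub> (Q \<cdot>\<^bsub>S\<^esub> X \<cdot>\<^bsub>S\<^esub> P) \<cdot>\<^bsub>S\<^esub> Q = P \<cdot>\<^bsub>S\<^esub> Q \<cdot>\<^bsub>S\<^esub> X \<cdot>\<^bsub>S\<^esub> P \<cdot>\<^bsub>S\<^esub> Q"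
    by (simp add: opmul_assoc)
  also have "\<dots> \<approx>\<^bsub>S\<^esub> P \<cdot>\<^bsub>S\<^esub> Q \<cdot>\<^bsub>S\<^esub> X"
    by (rule opmul_cancel_right[OF assms])
  also have "\<dots> \<approx>\<^bsub>S\<^esub> opid S \<cdot>\<^bsub>S\<^esub> X"
    by (rule opmul_congL[OF assms(2)])
  also have "\<dots> \<approx>\<^bsub>S\<^esub> X"
    by (rule opid_opmul[OF assms(1)])
  finally show ?thesis .
qed

lemma simple_diagonalizable_commutant_commute:
  assumes "finite S" "simple_diagonalizable S A"
    and "X \<cdot>\<^bsub>S\<^esub> A \<approx>\<^bsub>S\<^esub> A \<cdot>\<^bsub>S\<^esub> X" "Y \<cdot>\<^bsub>S\<^esub> A \<approx>\<^bsub>S\<^esub> A \<cdot>\<^bsub>S\<^esub> Y"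
  shows "X \<cdot>\<^bsub>S\<^esub> Y \<approx>\<^bsub>S\<^esub> Y \<cdot>\<^bsub>S\<^esub> X"
proof -
  obtain P Q ev where pq: "P \<cdot>\<^bsub>S\<^esub> Q \<approx>\<^bsub>S\<^esub> opid S" and qp: "Q \<cdot>\<^bsub>S\<^esub> P \<approx>\<^bsub>S\<^esub> opid S"
    and inj: "inj_on ev (states S)" and QAP: "Q \<cdot>\<^bsub>S\<^esub> A \<cdot>\<^bsub>S\<^esub> P \<approx>\<^bsub>S\<^esub> diag_op ev"
    using assms(2) unfolding simple_diagonalizable_diag_op by blast
  let ?c = "\<lambda>U. Q \<cdot>\<^bsub>S\<^esub> U \<cdot>\<^bsub>S\<^esub> P"
  have diagonal: "op_diagonal S (?c U)" if "U \<cdot>\<^bsub>S\<^esub> A \<approx>\<^bsub>S\<^esub> A \<cdot>\<^bsub>S\<^esub> U" for U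
  proof (rule op_diagonal_if_commute_diag_op[OF assms(1) inj])
    have "?c U \<cdot>\<^bsub>S\<^esub> diag_op ev \<approx>\<^bsub>S\<^esub> ?c U \<cdot>\<^bsub>S\<^esub> ?c A"
      by (rule opmul_congR[OF opeq_sym[OF QAP]])
    also have "\<dots> \<approx>\<^bsub>S\<^esub> ?c (U \<cdot>\<^bsub>S\<^esub> A)"
      by (rule conj_opmul[OF assms(1) pq])
    also have "\<dots> \<approx>\<^bsub>S\<^esub> ?c (A \<cdot>\<^bsub>S\<^esub> U)"
      by (intro opmul_congL opmul_congR that)
    also have "\<dots> \<approx>\<^bsub>S\<^esub> ?c A \<cdot>\<^bsub>S\<^esub> ?c U"
      by (rule opeq_sym[OF conj_opmul[OF assms(1) pq]])
    also have "\<dots> \<approx>\<^bsub>S\<^esub> diag_op ev \<cdot>\<^bsub>S\<^esub> ?c U"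
      by (rule opmul_congL[OF QAP])
    finally show "?c U \<cdot>\<^bsub>S\<^esub> diag_op ev \<approx>\<^bsub>S\<^esub> diag_op ev \<cdot>\<^bsub>S\<^esub> ?c U" .
  qed
  have "X \<cdot>\<^bsub>S\<^esub> Y \<approx>\<^bsub>S\<^esub> P \<cdot>\<^bsub>S\<^esub> ?c X \<cdot>\<^bsub>S\<^esub> Q \<cdot>\<^bsub>S\<^esub> (P \<cdot>\<^bsub>S\<^esub> ?c Y \<cdot>\<^bsub>S\<^esub> Q)"
    by (intro opmul_cong opeq_sym[OF conj_conj_cancel[OF assms(1) pq]])
  also have "\<dots> \<approx>\<^bsub>S\<^esub> P \<cdot>\<^bsub>S\<^esub> (?c X \<cdot>\<^bsub>S\<^esub> ?c Y) \<cdot>\<^bsub>S\<^esub> Q"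
    by (rule conj_opmul[OF assms(1) qp])
  also have "\<dots> \<approx>\<^bsub>S\<^esub> P \<cdot>\<^bsub>S\<^esub> (?c Y \<cdot>\<^bsub>S\<^esub> ?c X) \<cdot>\<^bsub>S\<^esub> Q"
    using op_diagonal_commute[OF assms(1) diagonal[OF assms(3)] diagonal[OF assms(4)]]
    by (intro opmul_congL opmul_congR)
  also have "\<dots> \<approx>\<^bsub>S\<^esub> P \<cdot>\<^bsub>S\<^esub> ?c Y \<cdot>\<^bsub>S\<^esub> Q \<cdot>\<^bsub>S\<^esub> (P \<cdot>\<^bsub>S\<^esub> ?c X \<cdot>\<^bsub>S\<^esub> Q)"
    by (rule opeq_sym[OF conj_opmul[OF assms(1) qp]])
  also have "\<dots> \<approx>\<^bsub>S\<^esub> Y \<cdot>\<^bsub>S\<^esub> X"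
    by (intro opmul_cong conj_conj_cancel[OF assms(1) pq])
  finally show ?thesis .
qed

lemma opmul_lift_left:
  assumes "finite S" "V \<subseteq> S" "x \<in> states S"
  shows "(lift S V A \<cdot>\<^bsub>S\<^esub> B) x y = (\<Sum>a\<in>states V. A (restrict x V) a * B (merge V x a) y)"
proof -
  have "(lift S V A \<cdot>\<^bsub>S\<^esub> B) x y =
      (\<Sum>u\<in>states (S - V). \<Sum>a\<in>states V. lift S V A x (merge V u a) * B (merge V u a) y)"
    unfolding opmul_def by (rule sum_states_split[OF assms(2)])
  also have "\<dots> = (\<Sum>a\<in>states V. \<Sum>u\<in>states (S - V).
      if \<forall>s\<in>S - V. u s = x s then A (restrict x V) a * B (merge V u a) y else 0)"
    by (subst sum.swap) (intro sum.cong refl, auto simp: lift_def)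
  also have "\<dots> = (\<Sum>a\<in>states V. A (restrict x V) a * B (merge V x a) y)"
    using assms by (subst sum_states_delta) (auto simp: merge_restrict_compl)
  finally show ?thesis .
qed

lemma opmul_lift_right:
  assumes "finite S" "V \<subseteq> S" "y \<in> states S"
  shows "(B \<cdot>\<^bsub>S\<^esub> lift S V A) x y = (\<Sum>a\<in>states V. B x (merge V y a) * A a (restrict y V))"
proof -
  have "(B \<cdot>\<^bsub>S\<^esub> lift S V A) x y =
      (\<Sum>u\<in>states (S - V). \<Sum>a\<in>states V. B x (merge V u a) * lift S V A (merge V u a) y)"
    unfolding opmul_def by (rule sum_states_split[OF assms(2)])
  also have "\<dots> = (\<Sum>a\<in>states V. \<Sum>u\<in>states (S - V).
      if \<forall>s\<in>S - V. u s = y s then B x (merge V u a) * A a (restrict y V) else 0)"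
    by (subst sum.swap) (intro sum.cong refl, auto simp: lift_def)
  also have "\<dots> = (\<Sum>a\<in>states V. B x (merge V y a) * A a (restrict y V))"
    using assms by (subst sum_states_delta) (auto simp: merge_restrict_compl)
  finally show ?thesis .
qed

lemma lift_opmul:
  fixes A B :: "('s, 'b::finite) kop"
  assumes "finite S" "T \<subseteq> S"
  shows "lift S T A \<cdot>\<^bsub>S\<^esub> lift S T B \<approx>\<^bsub>S\<^esub> lift S T (A \<cdot>\<^bsub>T\<^esub> B)"
  unfolding opeq_def
proof (intro ballI)
  fix x y :: "'s \<Rightarrow> 'b"
  assume x: "x \<in> states S"
  have "(lift S T A \<cdot>\<^bsub>S\<^esub> lift S T B) x y =
      (\<Sum>a\<in>states T. A (restrict x T) a * B a (restrict y T)) * (if \<forall>s\<in>S - T. x s = y s then 1 else 0)"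
    by (simp add: opmul_lift_left[OF assms x] lift_def sum_distrib_right)
  then show "(lift S T A \<cdot>\<^bsub>S\<^esub> lift S T B) x y = lift S T (A \<cdot>\<^bsub>T\<^esub> B) x y"
    by (simp add: lift_def opmul_def)
qed

lemma lift_opid:
  assumes "T \<subseteq> S"
  shows "lift S T (opid T) \<approx>\<^bsub>S\<^esub> (opid S :: ('s, 'b::finite) kop)"
  unfolding opeq_def
proof (intro ballI)
  fix x y :: "'s \<Rightarrow> 'b"
  assume "x \<in> states S" "y \<in> states S"
  then have "restrict x T = restrict y T \<and> (\<forall>s\<in>S - T. x s = y s) \<longleftrightarrow> x = y"
    using assms by (auto simp: fun_eq_iff states_iff restrict_def) (metis Diff_iff)
  then show "lift S T (opid T) x y = opid S x y"
    by (auto simp: lift_def opid_def)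
qed

lemma lift_self: "lift S S A \<approx>\<^bsub>S\<^esub> A"
  unfolding opeq_def lift_def by (simp add: restrict_states_id)

lemma lift_lift:
  fixes A :: "('s, 'b::finite) kop"
  assumes "U \<subseteq> T" "T \<subseteq> S"
  shows "lift S T (lift T U A) \<approx>\<^bsub>S\<^esub> lift S U A"
  unfolding opeq_def
proof (intro ballI)
  fix x y :: "'s \<Rightarrow> 'b"
  have r: "restrict (restrict z T) U = restrict z U" for z :: "'s \<Rightarrow> 'b"
    using assms by (auto simp: restrict_def fun_eq_iff)
  have "(\<forall>s\<in>T - U. restrict x T s = restrict y T s) \<and> (\<forall>s\<in>S - T. x s = y s) \<longleftrightarrow>
      (\<forall>s\<in>S - U. x s = y s)"
    using assms by auto
  then show "lift S T (lift T U A) x y = lift S U A x y"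
    unfolding lift_def r by auto
qed

lemma lift_cong: "A \<approx>\<^bsub>T\<^esub> B \<Longrightarrow> lift S T A \<approx>\<^bsub>S\<^esub> lift S T B"
  unfolding opeq_def lift_def by simp

lemma lift_opmul_lifts:
  assumes "finite S" "U \<subseteq> S" "V1 \<subseteq> U" "V2 \<subseteq> U"
  shows "lift S U (lift U V1 X1 \<cdot>\<^bsub>U\<^esub> lift U V2 X2) \<approx>\<^bsub>S\<^esub> lift S V1 X1 \<cdot>\<^bsub>S\<^esub> lift S V2 X2"
proof -
  have "lift S U (lift U V1 X1 \<cdot>\<^bsub>U\<^esub> lift U V2 X2) \<approx>\<^bsub>S\<^esub>
      lift S U (lift U V1 X1) \<cdot>\<^bsub>S\<^esub> lift S U (lift U V2 X2)"
    by (rule opeq_sym[OF lift_opmul[OF assms(1,2)]])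
  also have "\<dots> \<approx>\<^bsub>S\<^esub> lift S V1 X1 \<cdot>\<^bsub>S\<^esub> lift S V2 X2"
    using assms by (intro opmul_cong lift_lift) auto
  finally show ?thesis .
qed

lemma lift_opmul_lifts3:
  assumes "finite S" "U \<subseteq> S" "V1 \<subseteq> U" "V2 \<subseteq> U" "V3 \<subseteq> U"
  shows "lift S U (lift U V1 X1 \<cdot>\<^bsub>U\<^esub> lift U V2 X2 \<cdot>\<^bsub>U\<^esub> lift U V3 X3) \<approx>\<^bsub>S\<^esub>
    lift S V1 X1 \<cdot>\<^bsub>S\<^esub> lift S V2 X2 \<cdot>\<^bsub>S\<^esub> lift S V3 X3"
proof -
  have "lift S U (lift U V1 X1 \<cdot>\<^bsub>U\<^esub> lift U V2 X2 \<cdot>\<^bsub>U\<^esub> lift U V3 X3) \<approx>\<^bsub>S\<^esub>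
      lift S U (lift U V1 X1 \<cdot>\<^bsub>U\<^esub> lift U V2 X2) \<cdot>\<^bsub>S\<^esub> lift S U (lift U V3 X3)"
    by (rule opeq_sym[OF lift_opmul[OF assms(1,2)]])
  also have "\<dots> \<approx>\<^bsub>S\<^esub> lift S V1 X1 \<cdot>\<^bsub>S\<^esub> lift S V2 X2 \<cdot>\<^bsub>S\<^esub> lift S V3 X3"
    using assms by (intro opmul_cong lift_opmul_lifts lift_lift)
  finally show ?thesis .
qed

lemma lift_opmul_disjoint_apply:
  assumes "finite S" "T \<subseteq> S" "U \<subseteq> S" "T \<inter> U = {}" "x \<in> states S"
  shows "(lift S T A \<cdot>\<^bsub>S\<^esub> lift S U B) x y =
    A (restrict x T) (restrict y T) * B (restrict x U) (restrict y U) *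
    (if \<forall>s\<in>S - (T \<union> U). x s = y s then 1 else 0)"
proof -
  have "(lift S T A \<cdot>\<^bsub>S\<^esub> lift S U B) x y = (\<Sum>a\<in>states T. if \<forall>s\<in>T. a s = y s then
      A (restrict x T) a * (B (restrict x U) (restrict y U) *
      (if \<forall>s\<in>S - (T \<union> U). x s = y s then 1 else 0)) else 0)"
    unfolding opmul_lift_left[OF assms(1,2,5)]
  proof (intro sum.cong refl)
    fix a
    have "(\<forall>s\<in>S - U. merge T x a s = y s) \<longleftrightarrow> (\<forall>s\<in>T. a s = y s) \<and> (\<forall>s\<in>S - (T \<union> U). x s = y s)"
      using assms(2,4) by (auto simp: merge_def)
    then show "A (restrict x T) a * lift S U B (merge T x a) y = (if \<forall>s\<in>T. a s = y s then
        A (restrict x T) a * (B (restrict x U) (restrict y U) *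
        (if \<forall>s\<in>S - (T \<union> U). x s = y s then 1 else 0)) else 0)"
      using assms(4) by (simp add: lift_def restrict_merge_out inf_commute)
  qed
  then show ?thesis
    using assms by (simp add: sum_states_delta finite_subset mult.assoc)
qed

lemma lift_commute:
  assumes "finite S" "T \<subseteq> S" "U \<subseteq> S" "T \<inter> U = {}"
  shows "lift S T A \<cdot>\<^bsub>S\<^esub> lift S U B \<approx>\<^bsub>S\<^esub> lift S U B \<cdot>\<^bsub>S\<^esub> lift S T A"
  using assms
  by (auto simp: opeq_def lift_opmul_disjoint_apply Int_commute Un_commute mult_ac)

lemma lift_opprod:
  assumes "finite S" "T \<subseteq> S"
  shows "lift S T (opprod T As) \<approx>\<^bsub>S\<^esub> opprod S (map (lift S T) As)"
proof (induction As)
  case Nil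
  then show ?case
    using lift_opid[OF assms(2)] by simp
next
  case (Cons A As)
  have "lift S T (opprod T (A # As)) \<approx>\<^bsub>S\<^esub> lift S T A \<cdot>\<^bsub>S\<^esub> lift S T (opprod T As)"
    using opeq_sym[OF lift_opmul[OF assms]] by simp
  also have "\<dots> \<approx>\<^bsub>S\<^esub> opprod S (map (lift S T) (A # As))"
    using Cons by (simp add: opmul_congR)
  finally show ?case .
qed

lemma lift_loc:
  assumes "{a, b, c} \<subseteq> T" "T \<subseteq> S"
  shows "lift S T (loc T K a b c) \<approx>\<^bsub>S\<^esub> loc S K a b c"
  unfolding loc_def by (rule lift_lift[OF assms])

lemma lift_opprod_locs:
  assumes "finite S" "U \<subseteq> S" "\<And>x. x \<in> set xs \<Longrightarrow> {a x, b x, c x} \<subseteq> U"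
  shows "lift S U (opprod U (map (\<lambda>x. loc U (K x) (a x) (b x) (c x)) xs)) \<approx>\<^bsub>S\<^esub>
    opprod S (map (\<lambda>x. loc S (K x) (a x) (b x) (c x)) xs)"
proof -
  have "lift S U (opprod U (map (\<lambda>x. loc U (K x) (a x) (b x) (c x)) xs)) \<approx>\<^bsub>S\<^esub>
      opprod S (map (lift S U) (map (\<lambda>x. loc U (K x) (a x) (b x) (c x)) xs))"
    by (rule lift_opprod[OF assms(1,2)])
  also have "\<dots> \<approx>\<^bsub>S\<^esub> opprod S (map (\<lambda>x. loc S (K x) (a x) (b x) (c x)) xs)"
    unfolding map_map o_def using assms by (intro opprod_map_cong lift_loc) auto
  finally show ?thesis .
qed

section \<open>Partial traces\<close>

lemma ptrace_cong:
  "T \<subseteq> S \<Longrightarrow> A \<approx>\<^bsub>S\<^esub> B \<Longrightarrow> ptrace S T A \<approx>\<^bsub>S - T\<^esub> ptrace S T B"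
  unfolding opeq_def ptrace_def by (auto intro!: sum.cong merge_in_states)

lemma ptrace_opmul_lift_left:
  fixes Y A :: "('s, 'b::finite) kop"
  assumes "finite S" "T \<subseteq> S" "V \<subseteq> S - T"
  shows "ptrace S T (lift S V Y \<cdot>\<^bsub>S\<^esub> A) \<approx>\<^bsub>S - T\<^esub> lift (S - T) V Y \<cdot>\<^bsub>S - T\<^esub> ptrace S T A"
  unfolding opeq_def
proof (intro ballI)
  fix x y :: "'s \<Rightarrow> 'b"
  assume x: "x \<in> states (S - T)"
  have VT: "V \<inter> T = {}" "V \<subseteq> S"
    using assms by auto
  have "ptrace S T (lift S V Y \<cdot>\<^bsub>S\<^esub> A) x y =
      (\<Sum>w\<in>states T. \<Sum>a\<in>states V. Y (restrict x V) a * A (merge T (merge V x a) w) (merge T y w))"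
    unfolding ptrace_def using VT
    by (intro sum.cong refl)
      (simp add: opmul_lift_left[OF assms(1) VT(2) merge_in_states[OF x _ assms(2)]]
        restrict_merge_out merge_commute)
  also have "\<dots> = (\<Sum>a\<in>states V. Y (restrict x V) a * ptrace S T A (merge V x a) y)"
    unfolding ptrace_def sum_distrib_left by (rule sum.swap)
  also have "\<dots> = (lift (S - T) V Y \<cdot>\<^bsub>S - T\<^esub> ptrace S T A) x y"
    using assms by (subst opmul_lift_left[OF _ assms(3) x]) auto
  finally show "ptrace S T (lift S V Y \<cdot>\<^bsub>S\<^esub> A) x y = (lift (S - T) V Y \<cdot>\<^bsub>S - T\<^esub> ptrace S T A) x y" .
qed

lemma ptrace_opmul_lift_right:
  fixes Y A :: "('s, 'b::finite) kop"
  assumes "finite S" "T \<subseteq> S" "V \<subseteq> S - T"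
  shows "ptrace S T (A \<cdot>\<^bsub>S\<^esub> lift S V Y) \<approx>\<^bsub>S - T\<^esub> ptrace S T A \<cdot>\<^bsub>S - T\<^esub> lift (S - T) V Y"
  unfolding opeq_def
proof (intro ballI)
  fix x y :: "'s \<Rightarrow> 'b"
  assume y: "y \<in> states (S - T)"
  have VT: "V \<inter> T = {}" "V \<subseteq> S"
    using assms by auto
  have "ptrace S T (A \<cdot>\<^bsub>S\<^esub> lift S V Y) x y =
      (\<Sum>w\<in>states T. \<Sum>a\<in>states V. A (merge T x w) (merge T (merge V y a) w) * Y a (restrict y V))"
    unfolding ptrace_def using VT
    by (intro sum.cong refl)
      (simp add: opmul_lift_right[OF assms(1) VT(2) merge_in_states[OF y _ assms(2)]]
        restrict_merge_out merge_commute)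
  also have "\<dots> = (\<Sum>a\<in>states V. ptrace S T A x (merge V y a) * Y a (restrict y V))"
    unfolding ptrace_def sum_distrib_right by (rule sum.swap)
  also have "\<dots> = (ptrace S T A \<cdot>\<^bsub>S - T\<^esub> lift (S - T) V Y) x y"
    using assms by (subst opmul_lift_right[OF _ assms(3) y]) auto
  finally show "ptrace S T (A \<cdot>\<^bsub>S\<^esub> lift S V Y) x y = (ptrace S T A \<cdot>\<^bsub>S - T\<^esub> lift (S - T) V Y) x y" .
qed

lemma ptrace_Un:
  fixes A :: "('s, 'b::finite) kop"
  assumes "T1 \<inter> T2 = {}"
  shows "ptrace S (T1 \<union> T2) A \<approx>\<^bsub>S - (T1 \<union> T2)\<^esub> ptrace (S - T1) T2 (ptrace S T1 A)"
  unfolding opeq_def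
proof (intro ballI)
  fix x y :: "'s \<Rightarrow> 'b"
  have "merge (T1 \<union> T2) z (merge T1 u w) = merge T1 (merge T2 z u) w" for z u w :: "'s \<Rightarrow> 'b"
    by (auto simp: merge_def fun_eq_iff)
  moreover have "T1 \<union> T2 - T1 = T2"
    using assms by auto
  ultimately show "ptrace S (T1 \<union> T2) A x y = ptrace (S - T1) T2 (ptrace S T1 A) x y"
    unfolding ptrace_def by (subst sum_states_split[of T1]) auto
qed

lemma ptrace_lift:
  fixes X :: "('s, 'b::finite) kop"
  assumes "T \<subseteq> U" "U \<subseteq> S"
  shows "ptrace S T (lift S U X) \<approx>\<^bsub>S - T\<^esub> lift (S - T) (U - T) (ptrace U T X)"
  unfolding opeq_def
proof (intro ballI)
  fix x y :: "'s \<Rightarrow> 'b"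
  have "restrict (merge T z w) U = merge T (restrict z (U - T)) w" for z w :: "'s \<Rightarrow> 'b"
    using assms by (auto simp: merge_def restrict_def fun_eq_iff)
  moreover have "(\<forall>s\<in>S - U. merge T x w s = merge T y w s) \<longleftrightarrow> (\<forall>s\<in>S - T - (U - T). x s = y s)"
    for w :: "'s \<Rightarrow> 'b"
    using assms by (auto simp: merge_def)
  ultimately show "ptrace S T (lift S U X) x y = lift (S - T) (U - T) (ptrace U T X) x y"
    unfolding ptrace_def lift_def by (simp add: sum_distrib_right)
qed

lemma ptrace_cyclic:
  fixes P Y :: "('s, 'b::finite) kop"
  assumes "finite S" "T \<subseteq> S"
  shows "ptrace S T (lift S T P \<cdot>\<^bsub>S\<^esub> Y) \<approx>\<^bsub>S - T\<^esub> ptrace S T (Y \<cdot>\<^bsub>S\<^esub> lift S T P)"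
  unfolding opeq_def
proof (intro ballI)
  fix x y :: "'s \<Rightarrow> 'b"
  assume x: "x \<in> states (S - T)" and y: "y \<in> states (S - T)"
  have "ptrace S T (lift S T P \<cdot>\<^bsub>S\<^esub> Y) x y =
      (\<Sum>w\<in>states T. \<Sum>a\<in>states T. P w a * Y (merge T x a) (merge T y w))"
    unfolding ptrace_def
    by (intro sum.cong refl) (simp add: opmul_lift_left[OF assms merge_in_states[OF x _ assms(2)]])
  also have "\<dots> = (\<Sum>w\<in>states T. \<Sum>a\<in>states T. Y (merge T x w) (merge T y a) * P a w)"
    by (subst sum.swap) (simp add: mult.commute)
  also have "\<dots> = ptrace S T (Y \<cdot>\<^bsub>S\<^esub> lift S T P) x y"
    unfolding ptrace_def
    by (intro sum.cong refl) (simp add: opmul_lift_right[OF assms merge_in_states[OF y _ assms(2)]])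
  finally show "ptrace S T (lift S T P \<cdot>\<^bsub>S\<^esub> Y) x y = ptrace S T (Y \<cdot>\<^bsub>S\<^esub> lift S T P) x y" .
qed

lemma ptrace_conj:
  assumes "finite S" "E \<subseteq> S" "op_invertible E P"
    and "X \<cdot>\<^bsub>S\<^esub> lift S E P \<approx>\<^bsub>S\<^esub> lift S E P \<cdot>\<^bsub>S\<^esub> Y"
  shows "ptrace S E X \<approx>\<^bsub>S - E\<^esub> ptrace S E Y"
proof -
  obtain Q where "P \<cdot>\<^bsub>E\<^esub> Q \<approx>\<^bsub>E\<^esub> opid E" "Q \<cdot>\<^bsub>E\<^esub> P \<approx>\<^bsub>E\<^esub> opid E"
    using assms(3) unfolding op_invertible_def by blast
  then have PQ: "lift S E P \<cdot>\<^bsub>S\<^esub> lift S E Q \<approx>\<^bsub>S\<^esub> opid S"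
    and QP: "lift S E Q \<cdot>\<^bsub>S\<^esub> lift S E P \<approx>\<^bsub>S\<^esub> opid S"
    using assms(1,2) by (metis lift_opmul lift_cong lift_opid opeq_trans)+
  have "X \<approx>\<^bsub>S\<^esub> X \<cdot>\<^bsub>S\<^esub> lift S E P \<cdot>\<^bsub>S\<^esub> lift S E Q"
    by (rule opeq_sym[OF opmul_cancel_right[OF assms(1) PQ]])
  also have "\<dots> \<approx>\<^bsub>S\<^esub> lift S E P \<cdot>\<^bsub>S\<^esub> (Y \<cdot>\<^bsub>S\<^esub> lift S E Q)"
    unfolding opmul_assoc[symmetric] by (rule opmul_congL[OF assms(4)])
  finally have "ptrace S E X \<approx>\<^bsub>S - E\<^esub> ptrace S E (lift S E P \<cdot>\<^bsub>S\<^esub> (Y \<cdot>\<^bsub>S\<^esub> lift S E Q))"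
    by (rule ptrace_cong[OF assms(2)])
  also have "\<dots> \<approx>\<^bsub>S - E\<^esub> ptrace S E (Y \<cdot>\<^bsub>S\<^esub> lift S E Q \<cdot>\<^bsub>S\<^esub> lift S E P)"
    by (rule ptrace_cyclic[OF assms(1,2)])
  also have "\<dots> \<approx>\<^bsub>S - E\<^esub> ptrace S E Y"
    by (rule ptrace_cong[OF assms(2) opmul_cancel_right[OF assms(1) QP]])
  finally show ?thesis .
qed

lemma ptrace_lift_opmul:
  assumes "finite S" "UA \<subseteq> S" "UB \<subseteq> S" "TA \<subseteq> UA" "TB \<subseteq> UB" "TA \<inter> UB = {}" "TB \<inter> UA = {}"
  shows "ptrace S (TA \<union> TB) (lift S UA XA \<cdot>\<^bsub>S\<^esub> lift S UB XB) \<approx>\<^bsub>S - (TA \<union> TB)\<^esub>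
    lift (S - (TA \<union> TB)) (UA - TA) (ptrace UA TA XA) \<cdot>\<^bsub>S - (TA \<union> TB)\<^esub>
    lift (S - (TA \<union> TB)) (UB - TB) (ptrace UB TB XB)"
proof -
  have S': "S - (TA \<union> TB) = S - TA - TB"
    by auto
  have "ptrace S (TA \<union> TB) (lift S UA XA \<cdot>\<^bsub>S\<^esub> lift S UB XB) \<approx>\<^bsub>S - TA - TB\<^esub>
      ptrace (S - TA) TB (ptrace S TA (lift S UA XA \<cdot>\<^bsub>S\<^esub> lift S UB XB))"
    using ptrace_Un[of TA TB S] assms(5,6) unfolding S' by blast
  also have "\<dots> \<approx>\<^bsub>S - TA - TB\<^esub> ptrace (S - TA) TB (ptrace S TA (lift S UA XA) \<cdot>\<^bsub>S - TA\<^esub> lift (S - TA) UB XB)"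
    using assms by (intro ptrace_cong ptrace_opmul_lift_right) auto
  also have "\<dots> \<approx>\<^bsub>S - TA - TB\<^esub>
      ptrace (S - TA) TB (lift (S - TA) (UA - TA) (ptrace UA TA XA) \<cdot>\<^bsub>S - TA\<^esub> lift (S - TA) UB XB)"
    using assms by (intro ptrace_cong opmul_congL ptrace_lift) auto
  also have "\<dots> \<approx>\<^bsub>S - TA - TB\<^esub>
      lift (S - TA - TB) (UA - TA) (ptrace UA TA XA) \<cdot>\<^bsub>S - TA - TB\<^esub> ptrace (S - TA) TB (lift (S - TA) UB XB)"
    using assms by (intro ptrace_opmul_lift_left) auto
  also have "\<dots> \<approx>\<^bsub>S - TA - TB\<^esub>
      lift (S - TA - TB) (UA - TA) (ptrace UA TA XA) \<cdot>\<^bsub>S - TA - TB\<^esub> lift (S - TA - TB) (UB - TB) (ptrace UB TB XB)"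
    using assms by (intro opmul_congR ptrace_lift) auto
  finally show ?thesis
    unfolding S' .
qed

lemma ptrace_lift_opmul3:
  assumes "finite S" "UA \<subseteq> S" "UB \<subseteq> S" "UC \<subseteq> S" "TA \<subseteq> UA" "TB \<subseteq> UB" "TC \<subseteq> UC"
    and "TA \<inter> UB = {}" "TA \<inter> UC = {}" "TB \<inter> UA = {}" "TB \<inter> UC = {}" "TC \<inter> UA = {}" "TC \<inter> UB = {}"
  shows "ptrace S (TA \<union> TB \<union> TC) (lift S UA XA \<cdot>\<^bsub>S\<^esub> lift S UB XB \<cdot>\<^bsub>S\<^esub> lift S UC XC)
    \<approx>\<^bsub>S - (TA \<union> TB \<union> TC)\<^esub>
    lift (S - (TA \<union> TB \<union> TC)) (UA - TA) (ptrace UA TA XA) \<cdot>\<^bsub>S - (TA \<union> TB \<union> TC)\<^esub>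
    lift (S - (TA \<union> TB \<union> TC)) (UB - TB) (ptrace UB TB XB) \<cdot>\<^bsub>S - (TA \<union> TB \<union> TC)\<^esub>
    lift (S - (TA \<union> TB \<union> TC)) (UC - TC) (ptrace UC TC XC)"
proof -
  let ?U = "UB \<union> UC" and ?T = "TB \<union> TC"
  let ?S = "S - (TA \<union> ?T)"
  let ?Z = "lift ?U UB XB \<cdot>\<^bsub>?U\<^esub> lift ?U UC XC"
  have fin: "finite ?U"
    using assms(1-4) finite_subset by auto
  have T: "TA \<union> TB \<union> TC = TA \<union> ?T"
    by auto
  have "ptrace S (TA \<union> ?T) (lift S UA XA \<cdot>\<^bsub>S\<^esub> (lift S UB XB \<cdot>\<^bsub>S\<^esub> lift S UC XC))
      \<approx>\<^bsub>?S\<^esub> ptrace S (TA \<union> ?T) (lift S UA XA \<cdot>\<^bsub>S\<^esub> lift S ?U ?Z)"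
    using assms by (intro ptrace_cong opmul_congR opeq_sym[OF lift_opmul_lifts]) auto
  also have "\<dots> \<approx>\<^bsub>?S\<^esub> lift ?S (UA - TA) (ptrace UA TA XA) \<cdot>\<^bsub>?S\<^esub> lift ?S (?U - ?T) (ptrace ?U ?T ?Z)"
    unfolding T using assms by (intro ptrace_lift_opmul) auto
  also have "\<dots> \<approx>\<^bsub>?S\<^esub> lift ?S (UA - TA) (ptrace UA TA XA) \<cdot>\<^bsub>?S\<^esub>
      lift ?S (?U - ?T) (lift (?U - ?T) (UB - TB) (ptrace UB TB XB) \<cdot>\<^bsub>?U - ?T\<^esub>
        lift (?U - ?T) (UC - TC) (ptrace UC TC XC))"
    using assms by (intro opmul_congR lift_cong ptrace_lift_opmul fin) auto
  also have "\<dots> \<approx>\<^bsub>?S\<^esub> lift ?S (UA - TA) (ptrace UA TA XA) \<cdot>\<^bsub>?S\<^esub>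
      (lift ?S (UB - TB) (ptrace UB TB XB) \<cdot>\<^bsub>?S\<^esub> lift ?S (UC - TC) (ptrace UC TC XC))"
    using assms by (intro opmul_congR lift_opmul_lifts) auto
  finally show ?thesis
    unfolding T opmul_assoc .
qed

lemma ptrace_opprod_intertwine:
  assumes "finite S" "E \<subseteq> S" "m \<le> n"
    and "\<And>l. m \<le> l \<Longrightarrow> l < n \<Longrightarrow> X l \<cdot>\<^bsub>S\<^esub> P (Suc l) \<approx>\<^bsub>S\<^esub> P l \<cdot>\<^bsub>S\<^esub> Y l"
    and "P n = P m" "P m \<approx>\<^bsub>S\<^esub> lift S E Z" "op_invertible E Z"
  shows "ptrace S E (opprod S (map X [m..<n])) \<approx>\<^bsub>S - E\<^esub> ptrace S E (opprod S (map Y [m..<n]))"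
proof (rule ptrace_conj[OF assms(1,2,7)])
  have "opprod S (map X [m..<n]) \<cdot>\<^bsub>S\<^esub> lift S E Z \<approx>\<^bsub>S\<^esub> opprod S (map X [m..<n]) \<cdot>\<^bsub>S\<^esub> P n"
    unfolding assms(5) by (rule opmul_congR[OF opeq_sym[OF assms(6)]])
  also have "\<dots> \<approx>\<^bsub>S\<^esub> P m \<cdot>\<^bsub>S\<^esub> opprod S (map Y [m..<n])"
    using assms(4) by (rule opprod_intertwine[OF assms(1,3)])
  also have "\<dots> \<approx>\<^bsub>S\<^esub> lift S E Z \<cdot>\<^bsub>S\<^esub> opprod S (map Y [m..<n])"
    by (rule opmul_congL[OF assms(6)])
  finally show "opprod S (map X [m..<n]) \<cdot>\<^bsub>S\<^esub> lift S E Z \<approx>\<^bsub>S\<^esub> lift S E Z \<cdot>\<^bsub>S\<^esub> opprod S (map Y [m..<n])" .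
qed

section \<open>Relabelling slots\<close>

definition relabel :: "'s set \<Rightarrow> ('s \<Rightarrow> 't) \<Rightarrow> ('s, 'b) kop \<Rightarrow> ('t, 'b) kop" where
  "relabel S g A x y = A (restrict (x \<circ> g) S) (restrict (y \<circ> g) S)"

lemma bij_betw_relabel_states:
  fixes g :: "'s \<Rightarrow> 't"
  assumes "inj_on g S"
  shows "bij_betw (\<lambda>x. restrict (x \<circ> g) S) (states (g ` S) :: ('t \<Rightarrow> 'b::finite) set) (states S)"
proof (rule bij_betw_imageI)
  show "inj_on (\<lambda>x. restrict (x \<circ> g) S) (states (g ` S) :: ('t \<Rightarrow> 'b) set)"
  proof (rule inj_onI)
    fix x y :: "'t \<Rightarrow> 'b"
    assume "x \<in> states (g ` S)" "y \<in> states (g ` S)" and e: "restrict (x \<circ> g) S = restrict (y \<circ> g) S"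
    moreover have "x (g s) = y (g s)" if "s \<in> S" for s
      using fun_cong[OF e, of s] that by simp
    ultimately show "x = y"
      unfolding fun_eq_iff states_iff by (metis imageE)
  qed
  have "z \<in> (\<lambda>x. restrict (x \<circ> g) S) ` (states (g ` S) :: ('t \<Rightarrow> 'b) set)" if "z \<in> states S" for z
  proof (rule image_eqI)
    show "z = restrict (restrict (z \<circ> the_inv_into S g) (g ` S) \<circ> g) S"
      using that assms by (auto simp: fun_eq_iff states_iff the_inv_into_f_f)
  qed simp
  then show "(\<lambda>x. restrict (x \<circ> g) S) ` (states (g ` S) :: ('t \<Rightarrow> 'b) set) = states S"
    by auto
qed

lemma relabel_cong: "A \<approx>\<^bsub>S\<^esub> B \<Longrightarrow> relabel S g A \<approx>\<^bsub>g ` S\<^esub> relabel S g B"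
  unfolding opeq_def relabel_def by simp

lemma relabel_opmul:
  assumes "inj_on g S"
  shows "relabel S g (A \<cdot>\<^bsub>S\<^esub> B) \<approx>\<^bsub>g ` S\<^esub> relabel S g A \<cdot>\<^bsub>g ` S\<^esub> relabel S g B"
  unfolding opeq_def relabel_def opmul_def
  using sum.reindex_bij_betw[OF bij_betw_relabel_states[OF assms],
      of "\<lambda>w. A (restrict (_ \<circ> g) S) w * B w (restrict (_ \<circ> g) S)"]
  by simp

lemma relabel_opid:
  assumes "inj_on g S"
  shows "relabel S g (opid S) \<approx>\<^bsub>g ` S\<^esub> opid (g ` S)"
  using bij_betw_imp_inj_on[OF bij_betw_relabel_states[OF assms]]
  by (auto simp: opeq_def relabel_def opid_def dest: inj_onD)

lemma relabel_opprod:
  assumes "inj_on g S"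
  shows "relabel S g (opprod S As) \<approx>\<^bsub>g ` S\<^esub> opprod (g ` S) (map (relabel S g) As)"
proof (induction As)
  case Nil
  then show ?case
    using relabel_opid[OF assms] by simp
next
  case (Cons A As)
  then show ?case
    using opeq_trans[OF relabel_opmul[OF assms] opmul_congR] by simp
qed

lemma relabel_lift:
  fixes A :: "('s, 'b::finite) kop" and g :: "'s \<Rightarrow> 't"
  assumes "inj_on g S" "T \<subseteq> S"
  shows "relabel S g (lift S T A) \<approx>\<^bsub>g ` S\<^esub> lift (g ` S) (g ` T) (relabel T g A)"
  unfolding opeq_def
proof (intro ballI)
  fix x y :: "'t \<Rightarrow> 'b"
  have "restrict (restrict (z \<circ> g) S) T = restrict (restrict z (g ` T) \<circ> g) T" for z :: "'t \<Rightarrow> 'b"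
    using assms by (auto simp: fun_eq_iff)
  moreover have "(\<forall>s\<in>S - T. restrict (x \<circ> g) S s = restrict (y \<circ> g) S s) \<longleftrightarrow> (\<forall>t\<in>g ` S - g ` T. x t = y t)"
    using assms by (auto simp: inj_on_image_set_diff[symmetric])
  ultimately show "relabel S g (lift S T A) x y = lift (g ` S) (g ` T) (relabel T g A) x y"
    unfolding relabel_def lift_def by simp
qed

lemma relabel_loc:
  assumes "inj_on g S" "{a, b, c} \<subseteq> S"
  shows "relabel S g (loc S K a b c) \<approx>\<^bsub>g ` S\<^esub> loc (g ` S) K (g a) (g b) (g c)"
proof -
  have "relabel S g (loc S K a b c) \<approx>\<^bsub>g ` S\<^esub>
      lift (g ` S) (g ` {a, b, c}) (relabel {a, b, c} g (\<lambda>x y. K (x a, x b, x c) (y a, y b, y c)))"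
    unfolding loc_def by (rule relabel_lift[OF assms])
  also have "\<dots> \<approx>\<^bsub>g ` S\<^esub> loc (g ` S) K (g a) (g b) (g c)"
    unfolding loc_def image_insert image_empty
    by (rule lift_cong) (simp add: opeq_def relabel_def)
  finally show ?thesis .
qed

lemma relabel_ptrace:
  fixes A :: "('s, 'b::finite) kop" and g :: "'s \<Rightarrow> 't"
  assumes "inj_on g S" "T \<subseteq> S"
  shows "relabel (S - T) g (ptrace S T A) \<approx>\<^bsub>g ` S - g ` T\<^esub> ptrace (g ` S) (g ` T) (relabel S g A)"
  unfolding opeq_def
proof (intro ballI)
  fix x y :: "'t \<Rightarrow> 'b"
  have "restrict (merge (g ` T) z v \<circ> g) S = merge T (restrict (z \<circ> g) (S - T)) (restrict (v \<circ> g) T)"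
    for z v :: "'t \<Rightarrow> 'b"
    using assms by (auto simp: fun_eq_iff merge_def inj_on_eq_iff)
  then show "relabel (S - T) g (ptrace S T A) x y = ptrace (g ` S) (g ` T) (relabel S g A) x y"
    unfolding ptrace_def relabel_def
    using sum.reindex_bij_betw[OF bij_betw_relabel_states[OF inj_on_subset[OF assms]],
        of "\<lambda>w. A (merge T (restrict (x \<circ> g) (S - T)) w) (merge T (restrict (y \<circ> g) (S - T)) w)"]
    by simp
qed

lemma relabel_id_on:
  fixes A :: "('s, 'b::finite) kop"
  assumes "\<And>s. s \<in> S \<Longrightarrow> g s = s"
  shows "relabel S g A \<approx>\<^bsub>S\<^esub> A"
proof -
  have "restrict (z \<circ> g) S = z" if "z \<in> states S" for z :: "'s \<Rightarrow> 'b"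
    using assms that by (auto simp: fun_eq_iff states_iff)
  then show ?thesis
    by (simp add: opeq_def relabel_def)
qed

lemma relabel_opprod_locs:
  assumes "inj_on g S" "\<And>x. x \<in> set xs \<Longrightarrow> {a x, b x, c x} \<subseteq> S"
  shows "relabel S g (opprod S (map (\<lambda>x. loc S (K x) (a x) (b x) (c x)) xs)) \<approx>\<^bsub>g ` S\<^esub>
    opprod (g ` S) (map (\<lambda>x. loc (g ` S) (K x) (g (a x)) (g (b x)) (g (c x))) xs)"
proof -
  have "relabel S g (opprod S (map (\<lambda>x. loc S (K x) (a x) (b x) (c x)) xs)) \<approx>\<^bsub>g ` S\<^esub>
      opprod (g ` S) (map (relabel S g) (map (\<lambda>x. loc S (K x) (a x) (b x) (c x)) xs))"
    by (rule relabel_opprod[OF assms(1)])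
  also have "\<dots> \<approx>\<^bsub>g ` S\<^esub> opprod (g ` S) (map (\<lambda>x. loc (g ` S) (K x) (g (a x)) (g (b x)) (g (c x))) xs)"
    unfolding map_map o_def using assms by (intro opprod_map_cong relabel_loc) auto
  finally show ?thesis .
qed

lemma op_invertible_cong:
  assumes "finite S" "A \<approx>\<^bsub>S\<^esub> B" "op_invertible S A"
  shows "op_invertible S B"
  using assms(3) unfolding op_invertible_def
  by (meson assms(2) opeq_sym opeq_trans opmul_congL opmul_congR)

lemma op_invertible_relabel:
  assumes "inj_on g S" "op_invertible S A"
  shows "op_invertible (g ` S) (relabel S g A)"
proof -
  obtain B where "A \<cdot>\<^bsub>S\<^esub> B \<approx>\<^bsub>S\<^esub> opid S" "B \<cdot>\<^bsub>S\<^esub> A \<approx>\<^bsub>S\<^esub> opid S"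
    using assms(2) unfolding op_invertible_def by blast
  then have "relabel S g A \<cdot>\<^bsub>g ` S\<^esub> relabel S g B \<approx>\<^bsub>g ` S\<^esub> opid (g ` S)"
    "relabel S g B \<cdot>\<^bsub>g ` S\<^esub> relabel S g A \<approx>\<^bsub>g ` S\<^esub> opid (g ` S)"
    using assms(1) by (metis relabel_cong relabel_opid relabel_opmul opeq_sym opeq_trans)+
  then show ?thesis
    unfolding op_invertible_def by blast
qed

lemma opprod_locs_transport:
  assumes "finite S" "inj_on g U" "g ` U \<subseteq> S"
    and "\<And>x. x \<in> set xs \<union> set ys \<Longrightarrow> {a x, b x, c x} \<subseteq> U"
    and "opprod U (map (\<lambda>x. loc U (K x) (a x) (b x) (c x)) xs) \<approx>\<^bsub>U\<^esub>
      opprod U (map (\<lambda>x. loc U (K x) (a x) (b x) (c x)) ys)"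
  shows "opprod S (map (\<lambda>x. loc S (K x) (g (a x)) (g (b x)) (g (c x))) xs) \<approx>\<^bsub>S\<^esub>
    opprod S (map (\<lambda>x. loc S (K x) (g (a x)) (g (b x)) (g (c x))) ys)"
proof -
  let ?F = "\<lambda>T zs. opprod T (map (\<lambda>x. loc T (K x) (g (a x)) (g (b x)) (g (c x))) zs)"
  let ?R = "\<lambda>zs. relabel U g (opprod U (map (\<lambda>x. loc U (K x) (a x) (b x) (c x)) zs))"
  have transported: "?F S zs \<approx>\<^bsub>S\<^esub> lift S (g ` U) (?R zs)" if "set zs \<subseteq> set xs \<union> set ys" for zs
  proof -
    have "?F S zs \<approx>\<^bsub>S\<^esub> lift S (g ` U) (?F (g ` U) zs)"
      using that assms by (intro opeq_sym[OF lift_opprod_locs]) auto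
    also have "\<dots> \<approx>\<^bsub>S\<^esub> lift S (g ` U) (?R zs)"
      using that assms by (intro lift_cong opeq_sym[OF relabel_opprod_locs]) auto
    finally show ?thesis .
  qed
  have "?F S xs \<approx>\<^bsub>S\<^esub> lift S (g ` U) (?R xs)"
    by (rule transported) simp
  also have "\<dots> \<approx>\<^bsub>S\<^esub> lift S (g ` U) (?R ys)"
    by (intro lift_cong relabel_cong assms(5))
  also have "\<dots> \<approx>\<^bsub>S\<^esub> ?F S ys"
    by (rule opeq_sym[OF transported]) simp
  finally show ?thesis .
qed

lemma opprod_four:
  assumes "finite S"
  shows "opprod S [A, B, C, D] \<approx>\<^bsub>S\<^esub> A \<cdot>\<^bsub>S\<^esub> B \<cdot>\<^bsub>S\<^esub> C \<cdot>\<^bsub>S\<^esub> D"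
  using opmul_opid[OF assms, of D] by (simp add: opmul_assoc opmul_congR)

lemma BTE_at:
  assumes "BTE R R1 R2 R3 \<sigma>" "finite S"
    and "{s12, s13, s14, s23, s24, s34} \<subseteq> S" "distinct [s12, s13, s14, s23, s24, s34]"
  shows "loc S (R \<sigma> p1 p2 p3) s12 s13 s23 \<cdot>\<^bsub>S\<^esub> loc S (R1 (\<sigma> + 1) p1 p2 p4) s12 s14 s24 \<cdot>\<^bsub>S\<^esub>
      loc S (R2 \<sigma> p1 p3 p4) s13 s14 s34 \<cdot>\<^bsub>S\<^esub> loc S (R3 (\<sigma> + 1) p2 p3 p4) s23 s24 s34 \<approx>\<^bsub>S\<^esub>
    loc S (R3 \<sigma> p2 p3 p4) s23 s24 s34 \<cdot>\<^bsub>S\<^esub> loc S (R2 (\<sigma> + 1) p1 p3 p4) s13 s14 s34 \<cdot>\<^bsub>S\<^esub>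
      loc S (R1 \<sigma> p1 p2 p4) s12 s14 s24 \<cdot>\<^bsub>S\<^esub> loc S (R (\<sigma> + 1) p1 p2 p3) s12 s13 s23"
proof -
  let ?S0 = "{(1::nat, 2::nat), (1, 3), (1, 4), (2, 3), (2, 4), (3, 4)}"
  define g where "g p = (if p = (1, 2) then s12 else if p = (1, 3) then s13 else if p = (1, 4) then s14
    else if p = (2, 3) then s23 else if p = (2, 4) then s24 else s34)" for p :: "nat \<times> nat"
  define xs where "xs = [(R \<sigma> p1 p2 p3, (1::nat, 2::nat), (1::nat, 3::nat), (2::nat, 3::nat)),
    (R1 (\<sigma> + 1) p1 p2 p4, (1, 2), (1, 4), (2, 4)), (R2 \<sigma> p1 p3 p4, (1, 3), (1, 4), (3, 4)),
    (R3 (\<sigma> + 1) p2 p3 p4, (2, 3), (2, 4), (3, 4))]"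
  define ys where "ys = [(R3 \<sigma> p2 p3 p4, (2::nat, 3::nat), (2::nat, 4::nat), (3::nat, 4::nat)),
    (R2 (\<sigma> + 1) p1 p3 p4, (1, 3), (1, 4), (3, 4)), (R1 \<sigma> p1 p2 p4, (1, 2), (1, 4), (2, 4)),
    (R (\<sigma> + 1) p1 p2 p3, (1, 2), (1, 3), (2, 3))]"
  have "opprod S (map (\<lambda>x. loc S (fst x) (g (fst (snd x))) (g (fst (snd (snd x)))) (g (snd (snd (snd x))))) xs)
      \<approx>\<^bsub>S\<^esub>
      opprod S (map (\<lambda>x. loc S (fst x) (g (fst (snd x))) (g (fst (snd (snd x)))) (g (snd (snd (snd x))))) ys)"
  proof (rule opprod_locs_transport[OF assms(2), where U = ?S0])
    show "inj_on g ?S0"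
      using assms(4) by (auto simp: inj_on_def g_def)
    show "g ` ?S0 \<subseteq> S"
      using assms(3) by (auto simp: g_def)
  qed (use assms(1) in \<open>auto simp: xs_def ys_def BTE_def Let_def\<close>)
  then have "opprod S [loc S (R \<sigma> p1 p2 p3) s12 s13 s23, loc S (R1 (\<sigma> + 1) p1 p2 p4) s12 s14 s24,
        loc S (R2 \<sigma> p1 p3 p4) s13 s14 s34, loc S (R3 (\<sigma> + 1) p2 p3 p4) s23 s24 s34] \<approx>\<^bsub>S\<^esub>
      opprod S [loc S (R3 \<sigma> p2 p3 p4) s23 s24 s34, loc S (R2 (\<sigma> + 1) p1 p3 p4) s13 s14 s34,
        loc S (R1 \<sigma> p1 p2 p4) s12 s14 s24, loc S (R (\<sigma> + 1) p1 p2 p3) s12 s13 s23]"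
    by (simp add: xs_def ys_def g_def)
  then show ?thesis
    by (meson opprod_four[OF assms(2)] opeq_sym opeq_trans)
qed

lemma k3_invertible_loc:
  assumes "k3_invertible K" "distinct [e1, e2, e3]"
  shows "op_invertible {e1, e2, e3} (loc {e1, e2, e3} K e1 e2 e3)"
proof -
  let ?S0 = "{(1::nat, 2::nat), (1, 3), (2, 3)}"
  define g where "g p = (if p = (1, 2) then e1 else if p = (1, 3) then e2 else e3)" for p :: "nat \<times> nat"
  have inj: "inj_on g ?S0"
    using assms(2) by (auto simp: inj_on_def g_def)
  have "op_invertible (g ` ?S0) (relabel ?S0 g (loc ?S0 K (1, 2) (1, 3) (2, 3)))"
    using assms(1) by (intro op_invertible_relabel inj) (simp add: k3_invertible_def Let_def)
  with inj have "op_invertible (g ` ?S0) (loc (g ` ?S0) K (g (1, 2)) (g (1, 3)) (g (2, 3)))"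
    by (intro op_invertible_cong[OF _ relabel_loc]) auto
  moreover have "g ` ?S0 = {e1, e2, e3}"
    by (auto simp: g_def)
  ultimately show ?thesis
    by (simp add: g_def)
qed

definition col_slots :: "nat \<Rightarrow> plane \<Rightarrow> slot set" where
  "col_slots L \<gamma> = {(One l, \<gamma>) | l. l \<in> {1..2*L}}"

lemma col_slots_image: "col_slots L \<gamma> = (\<lambda>l. (One l, \<gamma>)) ` {1..2*L}"
  by (auto simp: col_slots_def)

lemma TS_col_slots: "TS L \<alpha> \<beta> = col_slots L \<alpha> \<union> col_slots L \<beta>"
  by (auto simp: TS_def col_slots_def)

lemma TS_iff: "x \<in> TS L \<alpha> \<beta> \<longleftrightarrow> (\<exists>l. 1 \<le> l \<and> l \<le> 2 * L \<and> (x = (One l, \<alpha>) \<or> x = (One l, \<beta>)))"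
  by (auto simp: TS_def)

lemma finite_col_slots [simp]: "finite (col_slots L \<gamma>)"
  by (simp add: col_slots_image)

lemma finite_TS [simp]: "finite (TS L \<alpha> \<beta>)"
  by (simp add: TS_col_slots)

lemma finite_Wslots [simp]: "finite (Wslots L M)"
proof -
  have "Wslots L M = (\<lambda>(l, m). (One l, Two m)) ` ({1..2*L} \<times> {1..2*M})"
    by (auto simp: Wslots_def)
  then show ?thesis
    by simp
qed

lemma loc_commute:
  assumes "finite S" "{a, b, c} \<subseteq> S" "{a', b', c'} \<subseteq> S" "{a, b, c} \<inter> {a', b', c'} = {}"
  shows "loc S K a b c \<cdot>\<^bsub>S\<^esub> loc S K' a' b' c' \<approx>\<^bsub>S\<^esub> loc S K' a' b' c' \<cdot>\<^bsub>S\<^esub> loc S K a b c"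
  unfolding loc_def by (rule lift_commute[OF assms])

definition trred_prod :: "(bit \<Rightarrow> 'c \<Rightarrow> 'c \<Rightarrow> 'c \<Rightarrow> 'b::finite k3) \<Rightarrow> nat \<Rightarrow> (nat \<Rightarrow> 'c) \<Rightarrow> bit \<Rightarrow>
    plane \<Rightarrow> plane \<Rightarrow> 'c \<Rightarrow> 'c \<Rightarrow> slot set \<Rightarrow> (slot, 'b) kop" where
  "trred_prod X L r1 \<sigma> \<alpha> \<beta> pa pb S =
    opprod S (map (\<lambda>l. loc S (X (\<sigma> + of_nat l) (r1 l) pa pb) (One l, \<alpha>) (One l, \<beta>) (\<alpha>, \<beta>)) [1..<2*L+1])"

lemma trred_eq_ptrace:
  "trred X L r1 \<sigma> \<alpha> \<beta> pa pb = ptrace (TS L \<alpha> \<beta> \<union> {(\<alpha>, \<beta>)}) {(\<alpha>, \<beta>)}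
    (trred_prod X L r1 \<sigma> \<alpha> \<beta> pa pb (TS L \<alpha> \<beta> \<union> {(\<alpha>, \<beta>)}))"
  by (simp add: trred_def trred_prod_def Let_def)

lemma trred_prod_lift:
  assumes "finite S" "TS L \<alpha> \<beta> \<union> {(\<alpha>, \<beta>)} \<subseteq> S"
  shows "trred_prod X L r1 \<sigma> \<alpha> \<beta> pa pb S \<approx>\<^bsub>S\<^esub>
    lift S (TS L \<alpha> \<beta> \<union> {(\<alpha>, \<beta>)}) (trred_prod X L r1 \<sigma> \<alpha> \<beta> pa pb (TS L \<alpha> \<beta> \<union> {(\<alpha>, \<beta>)}))"
  unfolding trred_prod_def using assms
  by (intro opeq_sym[OF lift_opprod_locs]) (auto simp: TS_def)

definition transfer_prod :: "(bit \<Rightarrow> 'c \<Rightarrow> 'c \<Rightarrow> 'c \<Rightarrow> 'b::finite k3) \<Rightarrow> nat \<Rightarrow> nat \<Rightarrow>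
    (nat \<Rightarrow> 'c) \<Rightarrow> (nat \<Rightarrow> 'c) \<Rightarrow> bit \<Rightarrow> 'c \<Rightarrow> plane \<Rightarrow> slot set \<Rightarrow> (slot, 'b) kop" where
  "transfer_prod X L M r1 r2 \<sigma> r \<gamma> S =
    opprod S (map (\<lambda>m. lift S (TS L (Two m) \<gamma>) (trred X L r1 (\<sigma> + of_nat m) (Two m) \<gamma> (r2 m) r))
      [1..<2*M+1])"

lemma transfer_eq_ptrace:
  "transfer X L M r1 r2 \<sigma> r = ptrace (Wslots L M \<union> col_slots L Three) (col_slots L Three)
    (transfer_prod X L M r1 r2 \<sigma> r Three (Wslots L M \<union> col_slots L Three))"
  by (simp add: transfer_def transfer_prod_def col_slots_def Let_def)

lemma transfer_prod_lift:
  assumes "finite S" "Wslots L M \<union> col_slots L \<gamma> \<subseteq> S"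
  shows "transfer_prod X L M r1 r2 \<sigma> r \<gamma> S \<approx>\<^bsub>S\<^esub>
    lift S (Wslots L M \<union> col_slots L \<gamma>) (transfer_prod X L M r1 r2 \<sigma> r \<gamma> (Wslots L M \<union> col_slots L \<gamma>))"
proof -
  let ?U = "Wslots L M \<union> col_slots L \<gamma>"
  let ?F = "\<lambda>m. trred X L r1 (\<sigma> + of_nat m) (Two m) \<gamma> (r2 m) r"
  have "lift S ?U (transfer_prod X L M r1 r2 \<sigma> r \<gamma> ?U) \<approx>\<^bsub>S\<^esub>
      opprod S (map (lift S ?U) (map (\<lambda>m. lift ?U (TS L (Two m) \<gamma>) (?F m)) [1..<2*M+1]))"
    unfolding transfer_prod_def by (rule lift_opprod[OF assms])
  also have "\<dots> \<approx>\<^bsub>S\<^esub> transfer_prod X L M r1 r2 \<sigma> r \<gamma> S"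
    unfolding transfer_prod_def map_map o_def using assms(2)
    by (intro opprod_map_cong lift_lift) (auto simp: TS_def Wslots_def col_slots_def)
  finally show ?thesis
    by (rule opeq_sym)
qed

fun swap34 :: "plane \<Rightarrow> plane" where
  "swap34 Three = Four" | "swap34 Four = Three" | "swap34 (One l) = One l" | "swap34 (Two m) = Two m"

definition swap34_slot :: "slot \<Rightarrow> slot" where
  "swap34_slot p = (swap34 (fst p), swap34 (snd p))"

lemma swap34_swap34 [simp]: "swap34 (swap34 p) = p"
  by (cases p) auto

lemma swap34_slot_apply [simp]: "swap34_slot (p, q) = (swap34 p, swap34 q)"
  by (simp add: swap34_slot_def)

lemma inj_swap34_slot: "inj_on swap34_slot A"
  by (rule inj_onI) (metis prod.collapse swap34_slot_def swap34_swap34 prod.inject)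

lemma swap34_slot_col_slots [simp]: "swap34_slot ` col_slots L \<gamma> = col_slots L (swap34 \<gamma>)"
  unfolding col_slots_image image_image by simp

lemma swap34_slot_TS [simp]: "swap34_slot ` TS L \<alpha> \<beta> = TS L (swap34 \<alpha>) (swap34 \<beta>)"
  by (simp add: TS_col_slots image_Un)

lemma swap34_slot_Wslots: "s \<in> Wslots L M \<Longrightarrow> swap34_slot s = s"
  unfolding Wslots_def by auto

lemma swap34_slot_image_Wslots [simp]: "swap34_slot ` Wslots L M = Wslots L M"
  by (simp add: swap34_slot_Wslots)

lemma relabel_swap34_trred:
  "relabel (TS L (Two m) Four) swap34_slot (trred X L r1 \<sigma> (Two m) Four pa pb)
    \<approx>\<^bsub>TS L (Two m) Three\<^esub> trred X L r1 \<sigma> (Two m) Three pa pb"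
proof -
  let ?U = "TS L (Two m) Four \<union> {(Two m, Four)}"
  have D: "TS L (Two m) Four - {(Two m, Four)} = TS L (Two m) Four"
    "TS L (Two m) Three - {(Two m, Three)} = TS L (Two m) Three"
    by (auto simp: TS_iff)
  have "{(One l, Two m), (One l, Four), (Two m, Four)} \<subseteq> ?U" if "l \<in> set [1..<2*L+1]" for l
    using that by (auto simp: TS_def)
  from relabel_opprod_locs[OF inj_swap34_slot this, where K = "\<lambda>l. X (\<sigma> + of_nat l) (r1 l) pa pb"]
  have relabelled: "relabel ?U swap34_slot (trred_prod X L r1 \<sigma> (Two m) Four pa pb ?U) \<approx>\<^bsub>swap34_slot ` ?U\<^esub>
      trred_prod X L r1 \<sigma> (Two m) Three pa pb (swap34_slot ` ?U)"
    unfolding trred_prod_def by (simp only: swap34_slot_apply swap34.simps)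
  have "relabel (?U - {(Two m, Four)}) swap34_slot (ptrace ?U {(Two m, Four)} (trred_prod X L r1 \<sigma> (Two m) Four pa pb ?U))
      \<approx>\<^bsub>swap34_slot ` ?U - swap34_slot ` {(Two m, Four)}\<^esub>
      ptrace (swap34_slot ` ?U) (swap34_slot ` {(Two m, Four)}) (trred_prod X L r1 \<sigma> (Two m) Three pa pb (swap34_slot ` ?U))"
    by (rule opeq_trans[OF relabel_ptrace[OF inj_swap34_slot] ptrace_cong[OF _ relabelled]]) auto
  then show ?thesis
    by (simp add: D trred_eq_ptrace)
qed

lemma relabel_swap34_transfer_prod:
  "relabel (Wslots L M \<union> col_slots L Four) swap34_slot
      (transfer_prod X L M r1 r2 \<sigma> r Four (Wslots L M \<union> col_slots L Four))
    \<approx>\<^bsub>Wslots L M \<union> col_slots L Three\<^esub> transfer_prod X L M r1 r2 \<sigma> r Three (Wslots L M \<union> col_slots L Three)"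
proof -
  let ?U = "Wslots L M \<union> col_slots L Four"
  have img: "swap34_slot ` ?U = Wslots L M \<union> col_slots L Three"
    by (simp add: image_Un)
  have "relabel ?U swap34_slot (transfer_prod X L M r1 r2 \<sigma> r Four ?U) \<approx>\<^bsub>swap34_slot ` ?U\<^esub>
      opprod (swap34_slot ` ?U) (map (relabel ?U swap34_slot) (map (\<lambda>m. lift ?U (TS L (Two m) Four)
        (trred X L r1 (\<sigma> + of_nat m) (Two m) Four (r2 m) r)) [1..<2*M+1]))"
    unfolding transfer_prod_def by (rule relabel_opprod[OF inj_swap34_slot])
  also have "\<dots> \<approx>\<^bsub>swap34_slot ` ?U\<^esub> transfer_prod X L M r1 r2 \<sigma> r Three (swap34_slot ` ?U)"
    unfolding transfer_prod_def map_map o_def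
  proof (rule opprod_map_cong)
    fix m assume "m \<in> set [1..<2*M+1]"
    then have "TS L (Two m) Four \<subseteq> ?U"
      by (auto simp: TS_def Wslots_def col_slots_def)
    from relabel_lift[OF inj_swap34_slot this]
    show "relabel ?U swap34_slot (lift ?U (TS L (Two m) Four) (trred X L r1 (\<sigma> + of_nat m) (Two m) Four (r2 m) r))
        \<approx>\<^bsub>swap34_slot ` ?U\<^esub>
        lift (swap34_slot ` ?U) (TS L (Two m) Three) (trred X L r1 (\<sigma> + of_nat m) (Two m) Three (r2 m) r)"
      using lift_cong[OF relabel_swap34_trred] by (fastforce intro: opeq_trans)
  qed
  finally show ?thesis
    unfolding img .
qed

lemma ptrace_transfer_prod_Four:
  "ptrace (Wslots L M \<union> col_slots L Four) (col_slots L Four)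
      (transfer_prod X L M r1 r2 \<sigma> r Four (Wslots L M \<union> col_slots L Four))
    \<approx>\<^bsub>Wslots L M\<^esub> transfer X L M r1 r2 \<sigma> r"
proof -
  let ?W = "Wslots L M" and ?C4 = "col_slots L Four" and ?C3 = "col_slots L Three"
  let ?Z = "transfer_prod X L M r1 r2 \<sigma> r Four (?W \<union> ?C4)"
  have W: "?W \<union> ?C4 - ?C4 = ?W" "?W \<union> ?C3 - ?C3 = ?W"
    by (auto simp: Wslots_def col_slots_def)
  have "ptrace (?W \<union> ?C4) ?C4 ?Z \<approx>\<^bsub>?W\<^esub> relabel ?W swap34_slot (ptrace (?W \<union> ?C4) ?C4 ?Z)"
    by (rule opeq_sym[OF relabel_id_on[OF swap34_slot_Wslots]])
  also have "\<dots> \<approx>\<^bsub>?W\<^esub> ptrace (?W \<union> ?C3) ?C3 (relabel (?W \<union> ?C4) swap34_slot ?Z)"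
    using relabel_ptrace[OF inj_swap34_slot, of ?C4 "?W \<union> ?C4" ?Z] by (simp add: W image_Un)
  also have "\<dots> \<approx>\<^bsub>?W\<^esub> ptrace (?W \<union> ?C3) ?C3 (transfer_prod X L M r1 r2 \<sigma> r Three (?W \<union> ?C3))"
  proof -
    have "ptrace (?W \<union> ?C3) ?C3 (relabel (?W \<union> ?C4) swap34_slot ?Z) \<approx>\<^bsub>?W \<union> ?C3 - ?C3\<^esub>
        ptrace (?W \<union> ?C3) ?C3 (transfer_prod X L M r1 r2 \<sigma> r Three (?W \<union> ?C3))"
      by (rule ptrace_cong[OF _ relabel_swap34_transfer_prod]) simp
    then show ?thesis
      unfolding W .
  qed
  also have "\<dots> = transfer X L M r1 r2 \<sigma> r"
    by (simp add: transfer_eq_ptrace)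
  finally show ?thesis .
qed

section \<open>The trace-reduced tetrahedron equation\<close>

context
  fixes S :: "slot set" and L :: nat and \<alpha>1 \<beta>1 \<alpha>2 \<beta>2 \<alpha>3 \<beta>3 :: plane and E :: "slot set"
  defines E_def: "E \<equiv> {(\<alpha>1, \<beta>1), (\<alpha>2, \<beta>2), (\<alpha>3, \<beta>3)}"
  assumes finite_S: "finite S"
    and distinct_edges: "distinct [(\<alpha>1, \<beta>1), (\<alpha>2, \<beta>2), (\<alpha>3, \<beta>3)]"
    and edges_not_One: "\<And>l. One l \<notin> {\<alpha>1, \<beta>1, \<alpha>2, \<beta>2, \<alpha>3, \<beta>3}"
    and slots_in_S: "TS L \<alpha>1 \<beta>1 \<union> TS L \<alpha>2 \<beta>2 \<union> TS L \<alpha>3 \<beta>3 \<union> E \<subseteq> S"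
begin

lemma edge_not_One: "(\<alpha>, \<beta>) \<in> E \<Longrightarrow> \<alpha> \<noteq> One l \<and> \<beta> \<noteq> One l"
  using edges_not_One[of l] by (auto simp: E_def)

lemma column_slots_in_S: "(\<alpha>, \<beta>) \<in> E \<Longrightarrow> TS L \<alpha> \<beta> \<union> {(\<alpha>, \<beta>)} \<subseteq> S"
  using slots_in_S by (auto simp: E_def)

lemma row_slots_in_S:
  assumes "(\<alpha>, \<beta>) \<in> E" "i \<in> {1..2*L}"
  shows "{(One i, \<alpha>), (One i, \<beta>), (\<alpha>, \<beta>)} \<subseteq> S"
proof -
  have "(One i, \<alpha>) \<in> TS L \<alpha> \<beta>" "(One i, \<beta>) \<in> TS L \<alpha> \<beta>"
    using assms(2) by (auto simp: TS_iff)
  then show ?thesis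
    using column_slots_in_S[OF assms(1)] by blast
qed

lemma row_locs_commute:
  assumes "i \<noteq> j" "(\<alpha>, \<beta>) \<noteq> (\<alpha>', \<beta>')" "(\<alpha>, \<beta>) \<in> E" "(\<alpha>', \<beta>') \<in> E" "i \<in> {1..2*L}" "j \<in> {1..2*L}"
  shows "loc S K (One i, \<alpha>) (One i, \<beta>) (\<alpha>, \<beta>) \<cdot>\<^bsub>S\<^esub> loc S K' (One j, \<alpha>') (One j, \<beta>') (\<alpha>', \<beta>')
    \<approx>\<^bsub>S\<^esub> loc S K' (One j, \<alpha>') (One j, \<beta>') (\<alpha>', \<beta>') \<cdot>\<^bsub>S\<^esub> loc S K (One i, \<alpha>) (One i, \<beta>) (\<alpha>, \<beta>)"
proof (rule loc_commute[OF finite_S])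
  show "{(One i, \<alpha>), (One i, \<beta>), (\<alpha>, \<beta>)} \<inter> {(One j, \<alpha>'), (One j, \<beta>'), (\<alpha>', \<beta>')} = {}"
    using assms(1-4) edge_not_One by fastforce
qed (use assms row_slots_in_S in auto)

lemma trred_prods_factor:
  "opprod S (map (\<lambda>l.
      loc S (X1 (c1 + of_nat l) (r1 l) p1 q1) (One l, \<alpha>1) (One l, \<beta>1) (\<alpha>1, \<beta>1) \<cdot>\<^bsub>S\<^esub>
      loc S (X2 (c2 + of_nat l) (r1 l) p2 q2) (One l, \<alpha>2) (One l, \<beta>2) (\<alpha>2, \<beta>2) \<cdot>\<^bsub>S\<^esub>
      loc S (X3 (c3 + of_nat l) (r1 l) p3 q3) (One l, \<alpha>3) (One l, \<beta>3) (\<alpha>3, \<beta>3)) [1..<2*L+1])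
    \<approx>\<^bsub>S\<^esub> trred_prod X1 L r1 c1 \<alpha>1 \<beta>1 p1 q1 S \<cdot>\<^bsub>S\<^esub> trred_prod X2 L r1 c2 \<alpha>2 \<beta>2 p2 q2 S \<cdot>\<^bsub>S\<^esub>
      trred_prod X3 L r1 c3 \<alpha>3 \<beta>3 p3 q3 S"
  unfolding trred_prod_def using distinct_edges
  by (intro opprod_map_mult3 conjI row_locs_commute finite_S) (auto simp: E_def)

lemma ptrace_trred_prod3:
  "ptrace S E (trred_prod X1 L r1 c1 \<alpha>1 \<beta>1 p1 q1 S \<cdot>\<^bsub>S\<^esub> trred_prod X2 L r1 c2 \<alpha>2 \<beta>2 p2 q2 S \<cdot>\<^bsub>S\<^esub>
      trred_prod X3 L r1 c3 \<alpha>3 \<beta>3 p3 q3 S)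
    \<approx>\<^bsub>S - E\<^esub>
      lift (S - E) (TS L \<alpha>1 \<beta>1) (trred X1 L r1 c1 \<alpha>1 \<beta>1 p1 q1) \<cdot>\<^bsub>S - E\<^esub>
      lift (S - E) (TS L \<alpha>2 \<beta>2) (trred X2 L r1 c2 \<alpha>2 \<beta>2 p2 q2) \<cdot>\<^bsub>S - E\<^esub>
      lift (S - E) (TS L \<alpha>3 \<beta>3) (trred X3 L r1 c3 \<alpha>3 \<beta>3 p3 q3)"
proof -
  let ?U = "\<lambda>\<alpha> \<beta>. TS L \<alpha> \<beta> \<union> {(\<alpha>, \<beta>)}"
  have E: "E = {(\<alpha>1, \<beta>1)} \<union> {(\<alpha>2, \<beta>2)} \<union> {(\<alpha>3, \<beta>3)}"
    by (auto simp: E_def)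
  have edge: "(\<alpha>, \<beta>) \<notin> TS L \<alpha>' \<beta>'" if "(\<alpha>, \<beta>) \<in> E" for \<alpha> \<beta> \<alpha>' \<beta>'
    using edge_not_One[OF that] by (auto simp: TS_iff)
  have "ptrace S E (trred_prod X1 L r1 c1 \<alpha>1 \<beta>1 p1 q1 S \<cdot>\<^bsub>S\<^esub> trred_prod X2 L r1 c2 \<alpha>2 \<beta>2 p2 q2 S \<cdot>\<^bsub>S\<^esub>
      trred_prod X3 L r1 c3 \<alpha>3 \<beta>3 p3 q3 S) \<approx>\<^bsub>S - E\<^esub> ptrace S E (
      lift S (?U \<alpha>1 \<beta>1) (trred_prod X1 L r1 c1 \<alpha>1 \<beta>1 p1 q1 (?U \<alpha>1 \<beta>1)) \<cdot>\<^bsub>S\<^esub>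
      lift S (?U \<alpha>2 \<beta>2) (trred_prod X2 L r1 c2 \<alpha>2 \<beta>2 p2 q2 (?U \<alpha>2 \<beta>2)) \<cdot>\<^bsub>S\<^esub>
      lift S (?U \<alpha>3 \<beta>3) (trred_prod X3 L r1 c3 \<alpha>3 \<beta>3 p3 q3 (?U \<alpha>3 \<beta>3)))"
    using slots_in_S
    by (intro ptrace_cong opmul_cong trred_prod_lift finite_S column_slots_in_S) (auto simp: E_def)
  also have "\<dots> \<approx>\<^bsub>S - E\<^esub>
      lift (S - E) (?U \<alpha>1 \<beta>1 - {(\<alpha>1, \<beta>1)}) (trred X1 L r1 c1 \<alpha>1 \<beta>1 p1 q1) \<cdot>\<^bsub>S - E\<^esub>
      lift (S - E) (?U \<alpha>2 \<beta>2 - {(\<alpha>2, \<beta>2)}) (trred X2 L r1 c2 \<alpha>2 \<beta>2 p2 q2) \<cdot>\<^bsub>S - E\<^esub>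
      lift (S - E) (?U \<alpha>3 \<beta>3 - {(\<alpha>3, \<beta>3)}) (trred X3 L r1 c3 \<alpha>3 \<beta>3 p3 q3)"
    unfolding E trred_eq_ptrace using column_slots_in_S edge distinct_edges
    by (intro ptrace_lift_opmul3 finite_S) (auto simp: E_def)
  also have "\<dots> =
      lift (S - E) (TS L \<alpha>1 \<beta>1) (trred X1 L r1 c1 \<alpha>1 \<beta>1 p1 q1) \<cdot>\<^bsub>S - E\<^esub>
      lift (S - E) (TS L \<alpha>2 \<beta>2) (trred X2 L r1 c2 \<alpha>2 \<beta>2 p2 q2) \<cdot>\<^bsub>S - E\<^esub>
      lift (S - E) (TS L \<alpha>3 \<beta>3) (trred X3 L r1 c3 \<alpha>3 \<beta>3 p3 q3)"
    using edge by (auto simp: E_def)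
  finally show ?thesis .
qed

text \<open>Factors from different rows and columns act on disjoint slots, so the traced stack of rows
  splits into the three trace reductions.\<close>

lemma ptrace_trred_prods:
  "ptrace S E (opprod S (map (\<lambda>l.
      loc S (X1 (c1 + of_nat l) (r1 l) p1 q1) (One l, \<alpha>1) (One l, \<beta>1) (\<alpha>1, \<beta>1) \<cdot>\<^bsub>S\<^esub>
      loc S (X2 (c2 + of_nat l) (r1 l) p2 q2) (One l, \<alpha>2) (One l, \<beta>2) (\<alpha>2, \<beta>2) \<cdot>\<^bsub>S\<^esub>
      loc S (X3 (c3 + of_nat l) (r1 l) p3 q3) (One l, \<alpha>3) (One l, \<beta>3) (\<alpha>3, \<beta>3)) [1..<2*L+1]))
    \<approx>\<^bsub>S - E\<^esub>
      lift (S - E) (TS L \<alpha>1 \<beta>1) (trred X1 L r1 c1 \<alpha>1 \<beta>1 p1 q1) \<cdot>\<^bsub>S - E\<^esub>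
      lift (S - E) (TS L \<alpha>2 \<beta>2) (trred X2 L r1 c2 \<alpha>2 \<beta>2 p2 q2) \<cdot>\<^bsub>S - E\<^esub>
      lift (S - E) (TS L \<alpha>3 \<beta>3) (trred X3 L r1 c3 \<alpha>3 \<beta>3 p3 q3)"
  using slots_in_S
  by (intro opeq_trans[OF ptrace_cong[OF _ trred_prods_factor] ptrace_trred_prod3]) auto

end

lemma ptrace_stacked_BTE:
  fixes R R1 R2 R3 :: "bit \<Rightarrow> 'c \<Rightarrow> 'c \<Rightarrow> 'c \<Rightarrow> 'b::finite k3" and L m :: nat
  assumes bte: "\<And>\<sigma>. BTE R R1 R2 R3 \<sigma>" and inv3: "\<And>\<sigma> p1 p2 p3. k3_invertible (R3 \<sigma> p1 p2 p3)"
  defines "E \<equiv> {(Two m, Three), (Two m, Four), (Three, Four)}"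
    and "S \<equiv> TS L (Two m) Three \<union> TS L (Two m) Four \<union> TS L Three Four \<union>
      {(Two m, Three), (Two m, Four), (Three, Four)}"
  shows "ptrace S E (opprod S (map (\<lambda>l.
      loc S (R (\<sigma> + of_nat l) (r1 l) pa p3) (One l, Two m) (One l, Three) (Two m, Three) \<cdot>\<^bsub>S\<^esub>
      loc S (R1 (\<sigma> + 1 + of_nat l) (r1 l) pa p4) (One l, Two m) (One l, Four) (Two m, Four) \<cdot>\<^bsub>S\<^esub>
      loc S (R2 (\<sigma> + of_nat l) (r1 l) p3 p4) (One l, Three) (One l, Four) (Three, Four)) [1..<2*L+1]))
    \<approx>\<^bsub>S - E\<^esub> ptrace S E (opprod S (map (\<lambda>l.
      loc S (R2 (\<sigma> + 1 + of_nat l) (r1 l) p3 p4) (One l, Three) (One l, Four) (Three, Four) \<cdot>\<^bsub>S\<^esub>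
      loc S (R1 (\<sigma> + of_nat l) (r1 l) pa p4) (One l, Two m) (One l, Four) (Two m, Four) \<cdot>\<^bsub>S\<^esub>
      loc S (R (\<sigma> + 1 + of_nat l) (r1 l) pa p3) (One l, Two m) (One l, Three) (Two m, Three)) [1..<2*L+1]))"
proof -
  have fin: "finite S" and ES: "E \<subseteq> S"
    by (auto simp: S_def E_def)
  define A where "A c l = loc S (R (c + of_nat l) (r1 l) pa p3) (One l, Two m) (One l, Three) (Two m, Three)"
    for c l
  define B where "B c l = loc S (R1 (c + of_nat l) (r1 l) pa p4) (One l, Two m) (One l, Four) (Two m, Four)"
    for c l
  define C where "C c l = loc S (R2 (c + of_nat l) (r1 l) p3 p4) (One l, Three) (One l, Four) (Three, Four)"
    for c l
  define P where "P l = loc S (R3 (\<sigma> + of_nat l) pa p3 p4) (Two m, Three) (Two m, Four) (Three, Four)" for l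
  have row: "A \<sigma> l \<cdot>\<^bsub>S\<^esub> B (\<sigma> + 1) l \<cdot>\<^bsub>S\<^esub> C \<sigma> l \<cdot>\<^bsub>S\<^esub> P (Suc l) \<approx>\<^bsub>S\<^esub>
      P l \<cdot>\<^bsub>S\<^esub> (C (\<sigma> + 1) l \<cdot>\<^bsub>S\<^esub> B \<sigma> l \<cdot>\<^bsub>S\<^esub> A (\<sigma> + 1) l)"
    if "1 \<le> l" "l < 2*L + 1" for l
  proof -
    have colours: "\<sigma> + of_nat l + 1 = \<sigma> + 1 + of_nat l" "\<sigma> + of_nat (Suc l) = \<sigma> + of_nat l + 1"
      by (simp_all only: of_nat_Suc ac_simps)
    have "{(One l, Two m), (One l, Three), (One l, Four), (Two m, Three), (Two m, Four), (Three, Four)} \<subseteq> S"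
      using that by (auto simp: S_def E_def TS_def)
    from BTE_at[OF bte fin this, of "\<sigma> + of_nat l" "r1 l" pa p3 p4] show ?thesis
      unfolding A_def B_def C_def P_def colours opmul_assoc by simp
  qed
  have "ptrace S E (opprod S (map (\<lambda>l. A \<sigma> l \<cdot>\<^bsub>S\<^esub> B (\<sigma> + 1) l \<cdot>\<^bsub>S\<^esub> C \<sigma> l) [1..<2*L+1])) \<approx>\<^bsub>S - E\<^esub>
      ptrace S E (opprod S (map (\<lambda>l. C (\<sigma> + 1) l \<cdot>\<^bsub>S\<^esub> B \<sigma> l \<cdot>\<^bsub>S\<^esub> A (\<sigma> + 1) l) [1..<2*L+1]))"
  proof (rule ptrace_opprod_intertwine[OF fin ES])
    show "P (2*L + 1) = P 1"
      by (simp add: P_def)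
    show "P 1 \<approx>\<^bsub>S\<^esub> lift S E (loc E (R3 (\<sigma> + 1) pa p3 p4) (Two m, Three) (Two m, Four) (Three, Four))"
      unfolding P_def E_def of_nat_1 using ES by (intro opeq_sym[OF lift_loc]) (auto simp: E_def)
    show "op_invertible E (loc E (R3 (\<sigma> + 1) pa p3 p4) (Two m, Three) (Two m, Four) (Three, Four))"
      unfolding E_def by (rule k3_invertible_loc[OF inv3]) simp
  qed (use row in simp_all)
  then show ?thesis
    by (simp add: A_def B_def C_def)
qed

lemma trred_BTE:
  fixes R R1 R2 R3 :: "bit \<Rightarrow> 'c \<Rightarrow> 'c \<Rightarrow> 'c \<Rightarrow> 'b::finite k3" and L m :: nat
  assumes "\<And>\<sigma>. BTE R R1 R2 R3 \<sigma>" "\<And>\<sigma> p1 p2 p3. k3_invertible (R3 \<sigma> p1 p2 p3)"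
  defines "S \<equiv> TS L (Two m) Three \<union> TS L (Two m) Four \<union> TS L Three Four"
  shows "lift S (TS L (Two m) Three) (trred R L r1 \<sigma> (Two m) Three pa p3) \<cdot>\<^bsub>S\<^esub>
      lift S (TS L (Two m) Four) (trred R1 L r1 (\<sigma> + 1) (Two m) Four pa p4) \<cdot>\<^bsub>S\<^esub>
      lift S (TS L Three Four) (trred R2 L r1 \<sigma> Three Four p3 p4)
    \<approx>\<^bsub>S\<^esub>
      lift S (TS L Three Four) (trred R2 L r1 (\<sigma> + 1) Three Four p3 p4) \<cdot>\<^bsub>S\<^esub>
      lift S (TS L (Two m) Four) (trred R1 L r1 \<sigma> (Two m) Four pa p4) \<cdot>\<^bsub>S\<^esub>
      lift S (TS L (Two m) Three) (trred R L r1 (\<sigma> + 1) (Two m) Three pa p3)"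
    (is "?lhs \<approx>\<^bsub>S\<^esub> ?rhs")
proof -
  define E where "E = {(Two m, Three), (Two m, Four), (Three, Four)}"
  define S' where "S' = S \<union> E"
  have fin: "finite S'" and S': "S' - E = S" "TS L (Two m) Three \<union> TS L (Two m) Four \<union> TS L Three Four \<union> E \<subseteq> S'"
    by (auto simp: S'_def S_def E_def TS_iff)
  have E': "E = {(Three, Four), (Two m, Four), (Two m, Three)}"
    by (auto simp: E_def)
  have lhs: "ptrace S' E (opprod S' (map (\<lambda>l.
      loc S' (R (\<sigma> + of_nat l) (r1 l) pa p3) (One l, Two m) (One l, Three) (Two m, Three) \<cdot>\<^bsub>S'\<^esub>
      loc S' (R1 (\<sigma> + 1 + of_nat l) (r1 l) pa p4) (One l, Two m) (One l, Four) (Two m, Four) \<cdot>\<^bsub>S'\<^esub>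
      loc S' (R2 (\<sigma> + of_nat l) (r1 l) p3 p4) (One l, Three) (One l, Four) (Three, Four)) [1..<2*L+1]))
    \<approx>\<^bsub>S\<^esub> ?lhs" (is "ptrace S' E ?L \<approx>\<^bsub>S\<^esub> _")
    unfolding S'(1)[symmetric] E_def
    by (rule ptrace_trred_prods[OF fin]) (use S'(2) in \<open>auto simp: E_def\<close>)
  have rhs: "ptrace S' E (opprod S' (map (\<lambda>l.
      loc S' (R2 (\<sigma> + 1 + of_nat l) (r1 l) p3 p4) (One l, Three) (One l, Four) (Three, Four) \<cdot>\<^bsub>S'\<^esub>
      loc S' (R1 (\<sigma> + of_nat l) (r1 l) pa p4) (One l, Two m) (One l, Four) (Two m, Four) \<cdot>\<^bsub>S'\<^esub>
      loc S' (R (\<sigma> + 1 + of_nat l) (r1 l) pa p3) (One l, Two m) (One l, Three) (Two m, Three)) [1..<2*L+1]))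
    \<approx>\<^bsub>S\<^esub> ?rhs" (is "ptrace S' E ?R \<approx>\<^bsub>S\<^esub> _")
    unfolding S'(1)[symmetric] E'
    by (rule ptrace_trred_prods[OF fin]) (use S'(2) in \<open>auto simp: E_def\<close>)
  have "ptrace S' E ?L \<approx>\<^bsub>S' - E\<^esub> ptrace S' E ?R"
    unfolding S'_def S_def E_def by (rule ptrace_stacked_BTE[OF assms(1,2)])
  then show ?thesis
    unfolding S'(1) using opeq_trans[OF opeq_sym[OF lhs] opeq_trans[OF _ rhs]] by blast
qed

section \<open>Exchange relation of layer transfer matrices\<close>

lemma ptrace_transfer_prod:
  assumes "\<gamma> \<in> {Three, Four}"
  shows "ptrace (Wslots L M \<union> col_slots L \<gamma>) (col_slots L \<gamma>)
      (transfer_prod X L M r1 r2 \<sigma> r \<gamma> (Wslots L M \<union> col_slots L \<gamma>))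
    \<approx>\<^bsub>Wslots L M\<^esub> transfer X L M r1 r2 \<sigma> r"
proof (cases "\<gamma> = Three")
  case True
  then show ?thesis
    by (simp add: transfer_eq_ptrace Wslots_def col_slots_def Un_Diff)
next
  case False
  with assms show ?thesis
    using ptrace_transfer_prod_Four by auto
qed

context
  fixes L M :: nat and \<gamma>1 \<gamma>2 :: plane and S :: "slot set"
  defines S_def: "S \<equiv> Wslots L M \<union> TS L Three Four"
  assumes extra_planes: "\<gamma>1 \<in> {Three, Four}" "\<gamma>2 \<in> {Three, Four}" "\<gamma>1 \<noteq> \<gamma>2"
begin

lemma TS_Three_Four_col_slots: "TS L Three Four = col_slots L \<gamma>1 \<union> col_slots L \<gamma>2"
  using extra_planes by (auto simp: TS_col_slots)

lemma finite_S: "finite S"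
  by (simp add: S_def)

lemma transfer_prods_factor:
  "opprod S (map (\<lambda>m.
      lift S (TS L (Two m) \<gamma>1) (trred X L r1 (c1 + of_nat m) (Two m) \<gamma>1 (r2 m) q1) \<cdot>\<^bsub>S\<^esub>
      lift S (TS L (Two m) \<gamma>2) (trred Y L r1 (c2 + of_nat m) (Two m) \<gamma>2 (r2 m) q2)) [1..<2*M+1])
    \<approx>\<^bsub>S\<^esub> transfer_prod X L M r1 r2 c1 q1 \<gamma>1 S \<cdot>\<^bsub>S\<^esub> transfer_prod Y L M r1 r2 c2 q2 \<gamma>2 S"
  unfolding transfer_prod_def using extra_planes
  by (intro opprod_map_mult lift_commute finite_S) (auto simp: S_def TS_def Wslots_def col_slots_def)

lemma ptrace_transfer_prod2:
  "ptrace S (TS L Three Four) (transfer_prod X L M r1 r2 c1 q1 \<gamma>1 S \<cdot>\<^bsub>S\<^esub> transfer_prod Y L M r1 r2 c2 q2 \<gamma>2 S)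
    \<approx>\<^bsub>Wslots L M\<^esub> transfer X L M r1 r2 c1 q1 \<cdot>\<^bsub>Wslots L M\<^esub> transfer Y L M r1 r2 c2 q2"
proof -
  let ?W = "Wslots L M" and ?C1 = "col_slots L \<gamma>1" and ?C2 = "col_slots L \<gamma>2"
  have W: "S - (?C1 \<union> ?C2) = ?W" "?W \<union> ?C1 - ?C1 = ?W" "?W \<union> ?C2 - ?C2 = ?W"
    using extra_planes by (auto simp: S_def TS_col_slots Wslots_def col_slots_def)
  have sub: "?W \<union> ?C1 \<subseteq> S" "?W \<union> ?C2 \<subseteq> S"
    by (auto simp: S_def TS_Three_Four_col_slots)
  have "ptrace S (?C1 \<union> ?C2) (transfer_prod X L M r1 r2 c1 q1 \<gamma>1 S \<cdot>\<^bsub>S\<^esub> transfer_prod Y L M r1 r2 c2 q2 \<gamma>2 S)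
      \<approx>\<^bsub>S - (?C1 \<union> ?C2)\<^esub> ptrace S (?C1 \<union> ?C2) (
        lift S (?W \<union> ?C1) (transfer_prod X L M r1 r2 c1 q1 \<gamma>1 (?W \<union> ?C1)) \<cdot>\<^bsub>S\<^esub>
        lift S (?W \<union> ?C2) (transfer_prod Y L M r1 r2 c2 q2 \<gamma>2 (?W \<union> ?C2)))"
    using sub by (intro ptrace_cong opmul_cong transfer_prod_lift finite_S) auto
  also have "\<dots> \<approx>\<^bsub>S - (?C1 \<union> ?C2)\<^esub>
      lift (S - (?C1 \<union> ?C2)) (?W \<union> ?C1 - ?C1) (ptrace (?W \<union> ?C1) ?C1 (transfer_prod X L M r1 r2 c1 q1 \<gamma>1 (?W \<union> ?C1)))
      \<cdot>\<^bsub>S - (?C1 \<union> ?C2)\<^esub>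
      lift (S - (?C1 \<union> ?C2)) (?W \<union> ?C2 - ?C2) (ptrace (?W \<union> ?C2) ?C2 (transfer_prod Y L M r1 r2 c2 q2 \<gamma>2 (?W \<union> ?C2)))"
    using sub extra_planes by (intro ptrace_lift_opmul finite_S) (auto simp: Wslots_def col_slots_def)
  finally have "ptrace S (?C1 \<union> ?C2) (transfer_prod X L M r1 r2 c1 q1 \<gamma>1 S \<cdot>\<^bsub>S\<^esub> transfer_prod Y L M r1 r2 c2 q2 \<gamma>2 S)
      \<approx>\<^bsub>?W\<^esub> lift ?W ?W (ptrace (?W \<union> ?C1) ?C1 (transfer_prod X L M r1 r2 c1 q1 \<gamma>1 (?W \<union> ?C1))) \<cdot>\<^bsub>?W\<^esub>
        lift ?W ?W (ptrace (?W \<union> ?C2) ?C2 (transfer_prod Y L M r1 r2 c2 q2 \<gamma>2 (?W \<union> ?C2)))"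
    by (simp only: W)
  also have "\<dots> \<approx>\<^bsub>?W\<^esub> transfer X L M r1 r2 c1 q1 \<cdot>\<^bsub>?W\<^esub> transfer Y L M r1 r2 c2 q2"
    by (intro opmul_cong opeq_trans[OF lift_self] ptrace_transfer_prod extra_planes)
  finally show ?thesis
    unfolding TS_Three_Four_col_slots .
qed

lemma ptrace_transfer_prods:
  "ptrace S (TS L Three Four) (opprod S (map (\<lambda>m.
      lift S (TS L (Two m) \<gamma>1) (trred X L r1 (c1 + of_nat m) (Two m) \<gamma>1 (r2 m) q1) \<cdot>\<^bsub>S\<^esub>
      lift S (TS L (Two m) \<gamma>2) (trred Y L r1 (c2 + of_nat m) (Two m) \<gamma>2 (r2 m) q2)) [1..<2*M+1]))
    \<approx>\<^bsub>Wslots L M\<^esub> transfer X L M r1 r2 c1 q1 \<cdot>\<^bsub>Wslots L M\<^esub> transfer Y L M r1 r2 c2 q2"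
proof -
  have SW: "S - TS L Three Four = Wslots L M"
    by (auto simp: S_def TS_iff Wslots_def)
  have "ptrace S (TS L Three Four) (opprod S (map (\<lambda>m.
      lift S (TS L (Two m) \<gamma>1) (trred X L r1 (c1 + of_nat m) (Two m) \<gamma>1 (r2 m) q1) \<cdot>\<^bsub>S\<^esub>
      lift S (TS L (Two m) \<gamma>2) (trred Y L r1 (c2 + of_nat m) (Two m) \<gamma>2 (r2 m) q2)) [1..<2*M+1]))
    \<approx>\<^bsub>S - TS L Three Four\<^esub>
      ptrace S (TS L Three Four) (transfer_prod X L M r1 r2 c1 q1 \<gamma>1 S \<cdot>\<^bsub>S\<^esub> transfer_prod Y L M r1 r2 c2 q2 \<gamma>2 S)"
    by (rule ptrace_cong[OF _ transfer_prods_factor]) (simp add: S_def)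
  then show ?thesis
    unfolding SW by (rule opeq_trans[OF _ ptrace_transfer_prod2])
qed

end

lemma ptrace_stacked_trred_BTE:
  fixes R R1 R2 R3 :: "bit \<Rightarrow> 'c \<Rightarrow> 'c \<Rightarrow> 'c \<Rightarrow> 'b::finite k3" and L M :: nat
  assumes bte: "\<And>\<sigma>. BTE R R1 R2 R3 \<sigma>" and inv3: "\<And>\<sigma> p1 p2 p3. k3_invertible (R3 \<sigma> p1 p2 p3)"
    and invtr: "\<And>\<sigma> p3 p4. op_invertible (TS L Three Four) (trred R2 L r1 \<sigma> Three Four p3 p4)"
  defines "S \<equiv> Wslots L M \<union> TS L Three Four"
  shows "ptrace S (TS L Three Four) (opprod S (map (\<lambda>m.
      lift S (TS L (Two m) Three) (trred R L r1 (\<sigma> + of_nat m) (Two m) Three (r2 m) p) \<cdot>\<^bsub>S\<^esub>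
      lift S (TS L (Two m) Four) (trred R1 L r1 (\<sigma> + 1 + of_nat m) (Two m) Four (r2 m) q)) [1..<2*M+1]))
    \<approx>\<^bsub>S - TS L Three Four\<^esub> ptrace S (TS L Three Four) (opprod S (map (\<lambda>m.
      lift S (TS L (Two m) Four) (trred R1 L r1 (\<sigma> + of_nat m) (Two m) Four (r2 m) q) \<cdot>\<^bsub>S\<^esub>
      lift S (TS L (Two m) Three) (trred R L r1 (\<sigma> + 1 + of_nat m) (Two m) Three (r2 m) p)) [1..<2*M+1]))"
proof -
  let ?E = "TS L Three Four"
  have fin: "finite S" and ES: "?E \<subseteq> S"
    by (auto simp: S_def)
  define a where "a c m = lift S (TS L (Two m) Three) (trred R L r1 (c + of_nat m) (Two m) Three (r2 m) p)" for c m
  define b where "b c m = lift S (TS L (Two m) Four) (trred R1 L r1 (c + of_nat m) (Two m) Four (r2 m) q)" for c m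
  define D where "D m = lift S ?E (trred R2 L r1 (\<sigma> + of_nat m + 1) Three Four p q)" for m
  have row: "a \<sigma> m \<cdot>\<^bsub>S\<^esub> b (\<sigma> + 1) m \<cdot>\<^bsub>S\<^esub> D (Suc m) \<approx>\<^bsub>S\<^esub> D m \<cdot>\<^bsub>S\<^esub> (b \<sigma> m \<cdot>\<^bsub>S\<^esub> a (\<sigma> + 1) m)"
    if "1 \<le> m" "m < 2*M + 1" for m
  proof -
    let ?S = "TS L (Two m) Three \<union> TS L (Two m) Four \<union> ?E"
    have colours: "\<sigma> + of_nat m + 1 = \<sigma> + 1 + of_nat m" "\<sigma> + of_nat (Suc m) + 1 = \<sigma> + of_nat m"
      by (simp_all only: of_nat_Suc ac_simps) simp
    have sub: "?S \<subseteq> S"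
      using that by (auto simp: S_def TS_def Wslots_def)
    from lift_cong[OF trred_BTE[OF bte inv3, of L m r1 "\<sigma> + of_nat m" "r2 m" p q], of S]
    show ?thesis
      unfolding a_def b_def D_def colours opmul_assoc[symmetric]
      by (meson lift_opmul_lifts3[OF fin sub] opeq_sym opeq_trans Un_upper1 Un_upper2 le_supI1)
  qed
  have "ptrace S ?E (opprod S (map (\<lambda>m. a \<sigma> m \<cdot>\<^bsub>S\<^esub> b (\<sigma> + 1) m) [1..<2*M+1])) \<approx>\<^bsub>S - ?E\<^esub>
      ptrace S ?E (opprod S (map (\<lambda>m. b \<sigma> m \<cdot>\<^bsub>S\<^esub> a (\<sigma> + 1) m) [1..<2*M+1]))"
  proof (rule ptrace_opprod_intertwine[OF fin ES, where Z = "trred R2 L r1 \<sigma> Three Four p q"])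
    show "D (2*M + 1) = D 1" "D 1 \<approx>\<^bsub>S\<^esub> lift S ?E (trred R2 L r1 \<sigma> Three Four p q)"
      by (simp_all add: D_def)
  qed (use row invtr in simp_all)
  then show ?thesis
    by (simp add: a_def b_def)
qed

lemma transfer_exchange:
  fixes R R1 R2 R3 :: "bit \<Rightarrow> 'c \<Rightarrow> 'c \<Rightarrow> 'c \<Rightarrow> 'b::finite k3"
  assumes "\<And>\<sigma>. BTE R R1 R2 R3 \<sigma>" "\<And>\<sigma> p1 p2 p3. k3_invertible (R3 \<sigma> p1 p2 p3)"
    and "\<And>\<sigma> p3 p4. op_invertible (TS L Three Four) (trred R2 L r1 \<sigma> Three Four p3 p4)"
  shows "transfer R L M r1 r2 \<sigma> p \<cdot>\<^bsub>Wslots L M\<^esub> transfer R1 L M r1 r2 (\<sigma> + 1) q \<approx>\<^bsub>Wslots L M\<^esub>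
    transfer R1 L M r1 r2 \<sigma> q \<cdot>\<^bsub>Wslots L M\<^esub> transfer R L M r1 r2 (\<sigma> + 1) p"
    (is "?lhs \<approx>\<^bsub>Wslots L M\<^esub> ?rhs")
proof -
  define S where "S = Wslots L M \<union> TS L Three Four"
  have SW: "S - TS L Three Four = Wslots L M"
    by (auto simp: S_def TS_iff Wslots_def)
  have lhs: "ptrace S (TS L Three Four) (opprod S (map (\<lambda>m.
      lift S (TS L (Two m) Three) (trred R L r1 (\<sigma> + of_nat m) (Two m) Three (r2 m) p) \<cdot>\<^bsub>S\<^esub>
      lift S (TS L (Two m) Four) (trred R1 L r1 (\<sigma> + 1 + of_nat m) (Two m) Four (r2 m) q)) [1..<2*M+1]))
    \<approx>\<^bsub>Wslots L M\<^esub> ?lhs" (is "ptrace S _ ?L \<approx>\<^bsub>_\<^esub> _")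
    unfolding S_def by (rule ptrace_transfer_prods) auto
  have rhs: "ptrace S (TS L Three Four) (opprod S (map (\<lambda>m.
      lift S (TS L (Two m) Four) (trred R1 L r1 (\<sigma> + of_nat m) (Two m) Four (r2 m) q) \<cdot>\<^bsub>S\<^esub>
      lift S (TS L (Two m) Three) (trred R L r1 (\<sigma> + 1 + of_nat m) (Two m) Three (r2 m) p)) [1..<2*M+1]))
    \<approx>\<^bsub>Wslots L M\<^esub> ?rhs" (is "ptrace S _ ?R \<approx>\<^bsub>_\<^esub> _")
    unfolding S_def by (rule ptrace_transfer_prods) auto
  have "ptrace S (TS L Three Four) ?L \<approx>\<^bsub>S - TS L Three Four\<^esub> ptrace S (TS L Three Four) ?R"
    unfolding S_def by (rule ptrace_stacked_trred_BTE[OF assms])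
  then show ?thesis
    unfolding SW using opeq_trans[OF opeq_sym[OF lhs] opeq_trans[OF _ rhs]] by blast
qed

lemma transfer2_commute:
  fixes R R1 R2 R3 :: "bit \<Rightarrow> 'c \<Rightarrow> 'c \<Rightarrow> 'c \<Rightarrow> 'b::finite k3"
  assumes "\<And>\<sigma>. BTE R R1 R2 R3 \<sigma>" "\<And>\<sigma> p1 p2 p3. k3_invertible (R3 \<sigma> p1 p2 p3)"
    and "\<And>\<sigma> p3 p4. op_invertible (TS L Three Four) (trred R2 L r1 \<sigma> Three Four p3 p4)"
  shows "transfer2 R L M r1 r2 u u' \<cdot>\<^bsub>Wslots L M\<^esub> transfer2 R1 L M r1 r2 t t' \<approx>\<^bsub>Wslots L M\<^esub>
    transfer2 R1 L M r1 r2 t t' \<cdot>\<^bsub>Wslots L M\<^esub> transfer2 R L M r1 r2 u u'"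
  unfolding transfer2_def by (rule exchange_commute) (rule transfer_exchange[OF assms])

theorem mainTheorem3:
  fixes R R1 R2 R3 :: "bit \<Rightarrow> 'c \<Rightarrow> 'c \<Rightarrow> 'c \<Rightarrow> 'b::finite k3"
    and L M :: nat and r1 r2 :: "nat \<Rightarrow> 'c"
  assumes "L \<ge> 1" and "M \<ge> 1"
    and bte: "\<And>\<sigma>. BTE R R1 R2 R3 \<sigma>"
    and inv3: "\<And>\<sigma> p1 p2 p3. k3_invertible (R3 \<sigma> p1 p2 p3)"
    and invtr: "\<And>\<sigma> p3 p4. op_invertible (TS L Three Four) (trred R2 L r1 \<sigma> Three Four p3 p4)"
    and diag: "\<exists>t t'. simple_diagonalizable (Wslots L M) (transfer2 R1 L M r1 r2 t t')"
  shows "\<forall>r r' s s'. opeq (Wslots L M)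
            (opmul (Wslots L M) (transfer2 R L M r1 r2 r r') (transfer2 R L M r1 r2 s s'))
            (opmul (Wslots L M) (transfer2 R L M r1 r2 s s') (transfer2 R L M r1 r2 r r'))"
proof (intro allI)
  fix r r' s s'
  obtain t t' where "simple_diagonalizable (Wslots L M) (transfer2 R1 L M r1 r2 t t')"
    using diag by blast
  then show "transfer2 R L M r1 r2 r r' \<cdot>\<^bsub>Wslots L M\<^esub> transfer2 R L M r1 r2 s s' \<approx>\<^bsub>Wslots L M\<^esub>
      transfer2 R L M r1 r2 s s' \<cdot>\<^bsub>Wslots L M\<^esub> transfer2 R L M r1 r2 r r'"
    by (rule simple_diagonalizable_commutant_commute[OF finite_Wslots _
          transfer2_commute[OF bte inv3 invtr] transfer2_commute[OF bte inv3 invtr]])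
qed

end
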